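(* Let $\mathcal S$ carry a $\sigma$-finite measure $\lambda$ and let $\{P_\xi:\xi\in\Xi\}$ be transition kernels with densities $P_\xi(ds'\mid s,a)=p_\xi(s'\mid s,a)\lambda(ds')$, $0\le p_\xi\le M$. Let $\Phi=\{(\mu,\Sigma):\mu\in\tilde\Xi,\ 0\preceq\Sigma\preceq\sigma_{\max}I\}$ with $\tilde\Xi\subset\mathbb R^d$ compact, and suppose there is $c>0$ with $q_\phi(s'\mid s,a)\ge c$ for every transition $(s,a,s')$ in the dataset and every $\phi\in\Phi$. Suppose that for every transition $x=(s,a,s')$: (1) $\xi\mapsto p_\xi(s'\mid s,a)$ is twice continuously differentiable; (2) there are constants $G_1,G_2>0$ with $|\nabla_\xi p_\xi(s'\mid s,a)|\le G_1$ and $|\nabla_\xi^2p_\xi(s'\mid s,a)|\le G_2$. Then for all such transitions $x$ and all $\phi,\psi\in\Phi$, $|a(x,\phi)-a(x,\psi)|\le L\|\phi-\psi\|_2$ with $L=\dfrac{G_1+G_2/2}{c}$.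
   Context: For $\phi=(\mu,\Sigma)$, $P_\phi=\mathcal N(\mu,\Sigma)$ (degenerate allowed), $q_\phi(s'\mid s,a)=\int p_\xi(s'\mid s,a)\,P_\phi(d\xi)$, and $a(x,\phi)=\log q_\phi(s'\mid s,a)$ for $x=(s,a,s')$. Here $p_\xi$ is defined for $\xi\in\mathbb R^d$ so that the Gaussian mixtures make sense. *)

theory Defs
  imports "HOL-Probability.Probability"
begin

definition std_gauss :: "(real^'d::finite) measure" where
  "std_gauss = density lborel
     (\<lambda>z. ennreal ((2 * pi) powr (- real CARD('d) / 2) * exp (- (norm z)\<^sup>2 / 2)))"

text \<open>Gaussian N(mu, Sigma), degenerate Sigma allowed: law of mu + A z with z standard
  normal and A A^T = Sigma (for positive semidefinite Sigma such A exists, and the law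
  does not depend on the choice of A).\<close>
definition gauss :: "real^'d::finite \<Rightarrow> real^'d^'d \<Rightarrow> (real^'d) measure" where
  "gauss mu Sig = distr (std_gauss :: (real^'d) measure) borel
     (\<lambda>z. mu + (SOME A. A ** transpose A = Sig) *v z)"

definition Phi :: "(real^'d::finite) set \<Rightarrow> real \<Rightarrow> ((real^'d) \<times> (real^'d^'d)) set" where
  "Phi Xi smax = {(mu, Sig). mu \<in> Xi \<and> transpose Sig = Sig \<and>
      (\<forall>v. 0 \<le> v \<bullet> (Sig *v v) \<and> v \<bullet> (Sig *v v) \<le> smax * (v \<bullet> v))}"

definition qmix :: "(real^'d::finite \<Rightarrow> 's \<Rightarrow> 'a \<Rightarrow> 's \<Rightarrow> real) \<Rightarrow>
    (real^'d) \<times> (real^'d^'d) \<Rightarrow> 's \<Rightarrow> 'a \<Rightarrow> 's \<Rightarrow> real" where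
  "qmix p phi s a s' = (\<integral>xi. p xi s a s' \<partial>(gauss (fst phi) (snd phi)))"

definition loglik :: "(real^'d::finite \<Rightarrow> 's \<Rightarrow> 'a \<Rightarrow> 's \<Rightarrow> real) \<Rightarrow>
    's \<times> 'a \<times> 's \<Rightarrow> (real^'d) \<times> (real^'d^'d) \<Rightarrow> real" where
  "loglik p x phi = (case x of (s, a, s') \<Rightarrow> ln (qmix p phi s a s'))"

end

(*
  Fix a transition and let f(xi) = p_xi(s' | s, a).  The mixture density is
  q(mu, Sigma) = E f(mu + A Z) with Z standard normal and A A^T = Sigma;
  such an A exists because a positive semidefinite matrix is a sum of outer products u u^T,
  obtained by repeatedly removing an eigenvector of positive eigenvalue.

  In the mean, q is G1-Lipschitz because f is.  In the covariance, take two independent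
  standard normals X, Y and Z_t = mu + cos t A1 X + sin t A2 Y, which has law N(mu, Sigma1)
  at t = 0 and N(mu, Sigma2) at t = pi/2.  Gaussian integration by parts (Stein's identity
  E k(X) X = E Dk(X)) turns d/dt E f(Z_t) into sin t cos t E <D^2 f(Z_t), Sigma2 - Sigma1>,
  which is bounded by G2 |Sigma2 - Sigma1| sin t cos t; integrating over [0, pi/2] gives the
  factor 1/2.  Finally ln is (1/c)-Lipschitz on [c, oo).
*)
theory Submission
  imports Defs
begin

lemma abs_ln_diff_le:
  fixes a b c :: real
  assumes "0 < c" "c \<le> a" "c \<le> b"
  shows "\<bar>ln a - ln b\<bar> \<le> \<bar>a - b\<bar> / c"
proof -
  have "norm (ln a - ln b) \<le> 1 / c * norm (a - b)"
  proof (rule field_differentiable_bound[of "{c..}" ln "\<lambda>x. 1 / x"])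
    show "(ln has_field_derivative 1 / x) (at x within {c..})" if "x \<in> {c..}" for x
      using that assms by (auto intro!: derivative_eq_intros)
    show "norm (1 / x) \<le> 1 / c" if "x \<in> {c..}" for x
      using that assms by (simp add: frac_le)
  qed (use assms in auto)
  then show ?thesis
    by simp
qed

lemma linear_le_quadratic_imp_zero:
  fixes a b :: real
  assumes "\<And>t. a * t \<le> b * t\<^sup>2"
  shows "a = 0"
proof (rule ccontr)
  assume "a \<noteq> 0"
  define c where "c = \<bar>b\<bar> + 1"
  define t where "t = a / (2 * c)"
  have "0 < c"
    by (simp add: c_def add_nonneg_pos)
  have "b * t\<^sup>2 \<le> c * t\<^sup>2"
    by (intro mult_right_mono) (auto simp: c_def)
  moreover have "a * t = a\<^sup>2 / (2 * c)" "c * t\<^sup>2 = a\<^sup>2 / (4 * c)"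
    using \<open>0 < c\<close> by (simp_all add: t_def power2_eq_square)
  ultimately have "a\<^sup>2 / (2 * c) \<le> a\<^sup>2 / (4 * c)"
    using assms[of t] by linarith
  moreover have "a\<^sup>2 / (4 * c) < a\<^sup>2 / (2 * c)"
    using \<open>a \<noteq> 0\<close> \<open>0 < c\<close> by (intro divide_strict_left_mono) auto
  ultimately show False
    by linarith
qed

lemma abs_diff_le_of_sin_cos_derivative:
  fixes F I :: "real \<Rightarrow> real"
  assumes der: "\<And>t. (F has_real_derivative sin t * cos t * I t) (at t)"
    and bound: "\<And>t. \<bar>I t\<bar> \<le> K"
  shows "\<bar>F (pi / 2) - F 0\<bar> \<le> K / 2"
proof -
  have "s * (F (pi / 2) - F 0) \<le> K / 2" if "\<bar>s\<bar> = 1" for s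
  proof -
    have "K / 2 * (sin 0)\<^sup>2 - s * F 0 \<le> K / 2 * (sin (pi / 2))\<^sup>2 - s * F (pi / 2)"
    proof (rule DERIV_nonneg_imp_nondecreasing[where f = "\<lambda>t. K / 2 * (sin t)\<^sup>2 - s * F t"])
      fix t :: real
      assume "0 \<le> t" "t \<le> pi / 2"
      then have "0 \<le> sin t * cos t"
        by (intro mult_nonneg_nonneg sin_ge_zero cos_ge_zero) auto
      moreover have "s * I t \<le> K"
        using bound[of t] that abs_ge_self[of "s * I t"] by (simp add: abs_mult)
      ultimately have "0 \<le> sin t * cos t * (K - s * I t)"
        by simp
      moreover have "((\<lambda>t. K / 2 * (sin t)\<^sup>2 - s * F t) has_real_derivative sin t * cos t * (K - s * I t)) (at t)"
        by (auto intro!: derivative_eq_intros der simp: power2_eq_square algebra_simps)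
      ultimately show "\<exists>y. ((\<lambda>t. K / 2 * (sin t)\<^sup>2 - s * F t) has_real_derivative y) (at t) \<and> 0 \<le> y"
        by blast
    qed simp
    then show ?thesis
      by (simp add: algebra_simps)
  qed
  from this[of 1] this[of "-1"] show ?thesis
    by (intro abs_leI) auto
qed

lemma lipschitz_bounded_gradient:
  fixes f :: "'a::real_inner \<Rightarrow> real"
  assumes "\<And>\<xi>. (f has_derivative (\<lambda>h. g \<xi> \<bullet> h)) (at \<xi>)" "\<And>\<xi>. norm (g \<xi>) \<le> G"
  shows "\<bar>f x - f y\<bar> \<le> G * norm (x - y)"
proof -
  have "onorm (\<lambda>h. g \<xi> \<bullet> h) \<le> G" for \<xi>
  proof -
    have "onorm (\<lambda>h. g \<xi> \<bullet> h) \<le> norm (g \<xi>) * onorm (\<lambda>x::'a. x)"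
      by (rule onorm_inner_right[OF bounded_linear_ident])
    also have "\<dots> \<le> norm (g \<xi>)"
      by (rule mult_left_le[OF onorm_id_le norm_ge_zero])
    finally show ?thesis
      using assms(2)[of \<xi>] by linarith
  qed
  then show ?thesis
    using differentiable_bound[of UNIV f "\<lambda>\<xi> h. g \<xi> \<bullet> h" G x y] assms(1) by simp
qed

lemma abs_inner_le_bound:
  fixes x y :: "'a::real_inner"
  assumes "norm x \<le> B"
  shows "\<bar>x \<bullet> y\<bar> \<le> B * norm y"
  using Cauchy_Schwarz_ineq2[of x y] mult_right_mono[OF assms norm_ge_zero[of y]] by linarith

(* The norm on matrices real^'n^'m is the Frobenius norm. *)
lemma norm_matrix_vector_mult_le: "norm (A *v x) \<le> norm A * norm x"
  for A :: "real^'n^'m"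
proof -
  have "(norm (A *v x))\<^sup>2 = (\<Sum>i\<in>UNIV. (A $ i \<bullet> x)\<^sup>2)"
    by (simp add: norm_vec_def L2_set_def sum_nonneg matrix_vector_mul_component)
  also have "\<dots> \<le> (\<Sum>i\<in>UNIV. (norm (A $ i))\<^sup>2 * (norm x)\<^sup>2)"
    by (intro sum_mono) (metis Cauchy_Schwarz_ineq2 abs_ge_zero power_mono power_mult_distrib power2_abs)
  also have "\<dots> = (norm A * norm x)\<^sup>2"
    by (simp add: norm_vec_def L2_set_def sum_distrib_right power_mult_distrib sum_nonneg)
  finally show ?thesis
    by (rule power2_le_imp_le) simp
qed

lemma abs_matrix_vector_mult_component_le: "\<bar>(A *v x) $ j\<bar> \<le> norm A * norm x"
  for A :: "real^'n^'m"
  using component_le_norm_cart[of "A *v x" j] norm_matrix_vector_mult_le[of A x] by simp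

lemma abs_inner_matrix_vector_mult_le:
  fixes A :: "real^'n^'m"
  assumes "norm x \<le> B"
  shows "\<bar>x \<bullet> (A *v y)\<bar> \<le> B * norm A * norm y"
proof -
  have "\<bar>x \<bullet> (A *v y)\<bar> \<le> B * norm (A *v y)"
    using assms by (rule abs_inner_le_bound)
  also have "\<dots> \<le> B * (norm A * norm y)"
    using order_trans[OF norm_ge_zero assms] by (intro mult_left_mono norm_matrix_vector_mult_le)
  finally show ?thesis
    by (simp add: mult.assoc)
qed

lemma norm_transpose: "norm (transpose A) = norm A"
  for A :: "real^'n^'m"
proof -
  have "(norm (transpose A))\<^sup>2 = (norm A)\<^sup>2"
    by (simp add: power2_norm_eq_inner inner_vec_def transpose_def) (rule sum.swap)
  then show ?thesis
    by simp
qed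

lemma bounded_linear_matrix_vector_mult_left: "bounded_linear (\<lambda>A::real^'n^'m. A *v w)"
  by (simp add: linear_conv_bounded_linear[symmetric] linearI matrix_vector_mult_add_rdistrib
      scaleR_matrix_vector_assoc)

lemmas continuous_on_matrix_vector_mult[continuous_intros] =
  bounded_linear.continuous_on[OF matrix_vector_mul_bounded_linear]

lemmas continuous_on_matrix_vector_mult_left[continuous_intros] =
  bounded_linear.continuous_on[OF bounded_linear_matrix_vector_mult_left]

lemma symmetric_matrix_inner_commute:
  fixes S :: "real^'n^'n"
  assumes "transpose S = S"
  shows "(S *v x) \<bullet> y = x \<bullet> (S *v y)"
  by (metis assms dot_lmul_matrix inner_commute transpose_matrix_vector)

lemma trace_transpose_mult_eq_inner:
  fixes A H :: "real^'n^'n"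
  shows "(\<Sum>j\<in>UNIV. (transpose A *v (H *v (A *v axis j 1))) $ j) = H \<bullet> (A ** transpose A)"
  by (simp add: inner_vec_def matrix_vector_mult_def matrix_matrix_mult_def transpose_def axis_def
      sum_distrib_left sum_distrib_right if_distrib cong: if_cong)
    (rule sum.swap[THEN trans], rule sum.cong, simp, rule sum.swap[THEN trans], simp add: mult_ac)

lemma (in prob_space) abs_integral_le_const:
  fixes f :: "'a \<Rightarrow> real"
  assumes "f \<in> borel_measurable M" "\<And>x. x \<in> space M \<Longrightarrow> \<bar>f x\<bar> \<le> B"
  shows "\<bar>\<integral>x. f x \<partial>M\<bar> \<le> B"
proof -
  have "integrable M f"
    using assms by (intro integrable_const_bound[of _ B]) auto
  then have "(\<integral>x. \<bar>f x\<bar> \<partial>M) \<le> B"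
    using assms by (intro integral_le_const) auto
  then show ?thesis
    using integral_abs_bound[of M f] by linarith
qed

lemma integral_dominated_convergence_at:
  fixes s :: "real \<Rightarrow> 'a \<Rightarrow> 'b::{banach, second_countable_topology}"
  assumes "f \<in> borel_measurable M" "\<And>r. s r \<in> borel_measurable M" "integrable M w"
    and lim: "AE x in M. ((\<lambda>r. s r x) \<longlongrightarrow> f x) (at t)"
    and bound: "\<forall>\<^sub>F r in at t. AE x in M. norm (s r x) \<le> w x"
  shows "((\<lambda>r. \<integral>x. s r x \<partial>M) \<longlongrightarrow> (\<integral>x. f x \<partial>M)) (at t)"
  unfolding tendsto_at_iff_sequentially comp_def
proof (intro allI impI)
  fix X :: "nat \<Rightarrow> real"
  assume "\<forall>i. X i \<in> UNIV - {t}" "X \<longlonglongrightarrow> t"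
  then have X: "filterlim X (at t) sequentially"
    by (simp add: filterlim_at)
  from filterlim_iff[THEN iffD1, OF X, rule_format, OF bound]
  obtain N where w: "\<And>n. N \<le> n \<Longrightarrow> AE x in M. norm (s (X n) x) \<le> w x"
    by (auto simp: eventually_sequentially)
  show "(\<lambda>n. \<integral>x. s (X n) x \<partial>M) \<longlonglongrightarrow> (\<integral>x. f x \<partial>M)"
  proof (rule LIMSEQ_offset, rule integral_dominated_convergence)
    show "AE x in M. norm (s (X (n + N)) x) \<le> w x" for n
      by (rule w) auto
    show "AE x in M. (\<lambda>n. s (X (n + N)) x) \<longlonglongrightarrow> f x"
      using lim
    proof eventually_elim
      fix x assume "((\<lambda>r. s r x) \<longlongrightarrow> f x) (at t)"
      then show "(\<lambda>n. s (X (n + N)) x) \<longlonglongrightarrow> f x"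
        by (intro LIMSEQ_ignore_initial_segment filterlim_compose[OF _ X])
    qed
  qed (use assms in auto)
qed

lemma has_real_derivative_integral:
  fixes u u' :: "real \<Rightarrow> 'a \<Rightarrow> real"
  assumes "0 < \<delta>"
    and meas: "\<And>r. u r \<in> borel_measurable M" "u' t \<in> borel_measurable M"
    and int: "integrable M (u t)" "integrable M w"
    and der: "\<And>x r. x \<in> space M \<Longrightarrow> \<bar>r - t\<bar> < \<delta> \<Longrightarrow> ((\<lambda>r. u r x) has_real_derivative u' r x) (at r)"
    and bnd: "\<And>x r. x \<in> space M \<Longrightarrow> \<bar>r - t\<bar> < \<delta> \<Longrightarrow> \<bar>u' r x\<bar> \<le> w x"
  shows "((\<lambda>r. \<integral>x. u r x \<partial>M) has_real_derivative (\<integral>x. u' t x \<partial>M)) (at t)"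
proof -
  have lip: "\<bar>u r x - u t x\<bar> \<le> w x * \<bar>r - t\<bar>" if "x \<in> space M" "\<bar>r - t\<bar> < \<delta>" for x r
    using field_differentiable_bound[of "ball t \<delta>" "\<lambda>r. u r x" "\<lambda>r. u' r x" "w x" r t]
      der[OF \<open>x \<in> space M\<close>] bnd[OF \<open>x \<in> space M\<close>] that \<open>0 < \<delta>\<close>
    by (auto simp: dist_real_def abs_minus_commute has_field_derivative_at_within)
  have near: "\<forall>\<^sub>F r in at t. r \<noteq> t \<and> \<bar>r - t\<bar> < \<delta>"
    unfolding eventually_at by (intro exI[of _ \<delta>]) (auto simp: dist_real_def \<open>0 < \<delta>\<close>)
  have int_r: "integrable M (u r)" if "\<bar>r - t\<bar> < \<delta>" for r
  proof (rule Bochner_Integration.integrable_bound[of _ "\<lambda>x. \<bar>u t x\<bar> + w x * \<delta>"])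
    show "AE x in M. norm (u r x) \<le> norm (\<bar>u t x\<bar> + w x * \<delta>)"
    proof (rule AE_I2)
      fix x assume x: "x \<in> space M"
      have "0 \<le> w x"
        using bnd[OF x, of t] \<open>0 < \<delta>\<close> by fastforce
      then have "w x * \<bar>r - t\<bar> \<le> w x * \<delta>"
        using that by (simp add: mult_left_mono)
      then show "norm (u r x) \<le> norm (\<bar>u t x\<bar> + w x * \<delta>)"
        using lip[OF x that] \<open>0 \<le> w x\<close> \<open>0 < \<delta>\<close> by simp
    qed
  qed (use int meas in auto)
  define q where "q r x = (u r x - u t x) / (r - t)" for r x
  have "((\<lambda>r. \<integral>x. q r x \<partial>M) \<longlongrightarrow> (\<integral>x. u' t x \<partial>M)) (at t)"
  proof (rule integral_dominated_convergence_at[where w = w])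
    show "AE x in M. ((\<lambda>r. q r x) \<longlongrightarrow> u' t x) (at t)"
      using der[of _ t] \<open>0 < \<delta>\<close> by (auto simp: q_def has_field_derivative_iff)
    show "\<forall>\<^sub>F r in at t. AE x in M. norm (q r x) \<le> w x"
      using near
    proof eventually_elim
      case (elim r)
      then show ?case
        using lip[of _ r] by (auto simp: q_def divide_le_eq)
    qed
  qed (use meas int in \<open>auto simp: q_def\<close>)
  moreover have "\<forall>\<^sub>F r in at t. (\<integral>x. q r x \<partial>M) = ((\<integral>x. u r x \<partial>M) - (\<integral>x. u t x \<partial>M)) / (r - t)"
    using near by eventually_elim (simp add: q_def int_r int)
  ultimately show ?thesis
    unfolding has_field_derivative_iff by (rule Lim_transform_eventually)
qed

section \<open>The standard Gaussian measure\<close>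

lemma prod_normal_density_eq:
  fixes x :: "'a::euclidean_space"
  assumes "0 < \<sigma>"
  shows "(\<Prod>b\<in>Basis. normal_density 0 \<sigma> (x \<bullet> b))
    = (1 / sqrt (2 * pi * \<sigma>\<^sup>2)) ^ DIM('a) * exp (- (norm x)\<^sup>2 / (2 * \<sigma>\<^sup>2))"
proof -
  have "(\<Prod>b\<in>Basis. normal_density 0 \<sigma> (x \<bullet> b))
      = (\<Prod>b\<in>(Basis::'a set). (1 / sqrt (2 * pi * \<sigma>\<^sup>2)) * exp (- (x \<bullet> b)\<^sup>2 / (2 * \<sigma>\<^sup>2)))"
    by (simp add: normal_density_def)
  also have "\<dots> = (1 / sqrt (2 * pi * \<sigma>\<^sup>2)) ^ DIM('a) * exp (\<Sum>b\<in>Basis. - (x \<bullet> b)\<^sup>2 / (2 * \<sigma>\<^sup>2))"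
    by (subst prod.distrib) (simp add: exp_sum)
  also have "(\<Sum>b\<in>Basis. - (x \<bullet> b)\<^sup>2 / (2 * \<sigma>\<^sup>2)) = - (norm x)\<^sup>2 / (2 * \<sigma>\<^sup>2)"
  proof -
    have "(norm x)\<^sup>2 = (\<Sum>b\<in>Basis. (x \<bullet> b)\<^sup>2)"
      unfolding power2_norm_eq_inner by (simp add: euclidean_inner[of x x] power2_eq_square)
    then show ?thesis
      by (simp add: sum_divide_distrib sum_negf)
  qed
  finally show ?thesis .
qed

lemma nn_integral_prod_normal_density:
  assumes "0 < \<sigma>"
  shows "(\<integral>\<^sup>+x. ennreal (\<Prod>b\<in>Basis. normal_density 0 \<sigma> (x \<bullet> b)) \<partial>(lborel::'a::euclidean_space measure)) = 1"
proof -
  have "(\<integral>\<^sup>+x. ennreal (\<Prod>b\<in>Basis. normal_density 0 \<sigma> (x \<bullet> b)) \<partial>(lborel::'a measure))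
      = (\<integral>\<^sup>+x. (\<Prod>b\<in>Basis. ennreal (normal_density 0 \<sigma> (x \<bullet> b))) \<partial>(lborel::'a measure))"
    by (simp add: prod_ennreal)
  also have "\<dots> = (\<Prod>b\<in>(Basis::'a set). \<integral>\<^sup>+y. ennreal (normal_density 0 \<sigma> y) \<partial>lborel)"
    by (rule nn_integral_lborel_prod) auto
  also have "(\<integral>\<^sup>+y. ennreal (normal_density 0 \<sigma> y) \<partial>lborel) = 1"
    using assms by (subst nn_integral_eq_integral) auto
  finally show ?thesis
    by simp
qed

lemma integrable_exp_neg_sq_norm:
  assumes "0 < a"
  shows "integrable (lborel::'a::euclidean_space measure) (\<lambda>x. exp (- a * (norm x)\<^sup>2))"
proof -
  define \<sigma> where "\<sigma> = sqrt (1 / (2 * a))"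
  define C where "C = (1 / sqrt (2 * pi * \<sigma>\<^sup>2)) ^ DIM('a)"
  have "0 < \<sigma>" "2 * \<sigma>\<^sup>2 = 1 / a" "0 < C"
    using assms by (simp_all add: \<sigma>_def C_def)
  then have eq: "exp (- a * (norm x)\<^sup>2) = (\<Prod>b\<in>Basis. normal_density 0 \<sigma> (x \<bullet> b)) / C" for x :: 'a
    by (simp add: prod_normal_density_eq C_def)
  have "integrable (lborel::'a measure) (\<lambda>x. \<Prod>b\<in>Basis. normal_density 0 \<sigma> (x \<bullet> b))"
    using \<open>0 < \<sigma>\<close> by (intro integrableI_nonneg) (auto simp: nn_integral_prod_normal_density prod_nonneg)
  then show ?thesis
    unfolding eq by simp
qed

definition gauss_density :: "real^'d::finite \<Rightarrow> real" where
  "gauss_density z = (2 * pi) powr (- real CARD('d) / 2) * exp (- (norm z)\<^sup>2 / 2)"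

lemma gauss_density_nonneg: "0 \<le> gauss_density z"
  by (simp add: gauss_density_def)

lemma borel_measurable_gauss_density[measurable]: "gauss_density \<in> borel_measurable borel"
  unfolding gauss_density_def[abs_def] by measurable

lemma std_gauss_eq_density: "std_gauss = density lborel (\<lambda>z. ennreal (gauss_density z))"
  by (simp add: std_gauss_def gauss_density_def)

lemma sets_std_gauss[simp, measurable_cong]: "sets std_gauss = sets borel"
  by (simp add: std_gauss_def)

lemma space_std_gauss[simp]: "space std_gauss = UNIV"
  by (simp add: std_gauss_def)

lemma prob_space_std_gauss: "prob_space (std_gauss :: (real^'d::finite) measure)"
proof
  have "(1 / sqrt (2 * pi * 1\<^sup>2)) ^ CARD('d) = (2 * pi) powr (- real CARD('d) / 2)"
    by (simp add: powr_minus_divide powr_realpow[symmetric] powr_half_sqrt[symmetric] powr_powr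
        divide_simps powr_divide)
  then have "gauss_density z = (\<Prod>b\<in>Basis. normal_density 0 1 (z \<bullet> b))" for z :: "real^'d"
    by (simp add: gauss_density_def prod_normal_density_eq)
  then show "emeasure (std_gauss :: (real^'d) measure) (space std_gauss) = 1"
    by (simp add: std_gauss_eq_density emeasure_density nn_integral_prod_normal_density)
qed

lemma integral_std_gauss:
  assumes "f \<in> borel_measurable borel"
  shows "(\<integral>z. f z \<partial>std_gauss) = (\<integral>z. gauss_density z * f z \<partial>lborel)"
  unfolding std_gauss_eq_density using assms
  by (subst integral_density) (auto simp: gauss_density_nonneg)

lemma borel_measurable_std_gauss_continuous:
  "continuous_on UNIV f \<Longrightarrow> f \<in> borel_measurable (std_gauss :: (real^'d::finite) measure)"
  using borel_measurable_continuous_onI[of f] by (simp add: measurable_cong_sets[OF sets_std_gauss refl])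

lemma integrable_std_gauss_bounded:
  fixes f :: "real^'d::finite \<Rightarrow> real"
  assumes "continuous_on UNIV f" "\<And>z. \<bar>f z\<bar> \<le> B"
  shows "integrable std_gauss f"
proof -
  interpret prob_space "std_gauss :: (real^'d) measure"
    by (rule prob_space_std_gauss)
  show ?thesis
    using assms by (intro integrable_const_bound[of _ B] borel_measurable_std_gauss_continuous) auto
qed

lemma abs_le_exp_sq_div_8: "\<bar>y::real\<bar> \<le> 2 * exp (y\<^sup>2 / 8)"
proof -
  have "\<bar>y\<bar> \<le> 2 + y\<^sup>2 / 4"
    using zero_le_power2[of "\<bar>y\<bar> - 2"] by (simp add: power2_eq_square algebra_simps)
  then show ?thesis
    using exp_ge_add_one_self[of "y\<^sup>2 / 8"] by linarith
qed

lemma integrable_norm_std_gauss: "integrable (std_gauss :: (real^'d::finite) measure) norm"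
proof -
  define C where "C = (2 * pi) powr (- real CARD('d) / 2)"
  have "integrable (lborel :: (real^'d) measure) (\<lambda>x. gauss_density x *\<^sub>R norm x)"
  proof (rule Bochner_Integration.integrable_bound)
    show "integrable (lborel :: (real^'d) measure) (\<lambda>x. 2 * C * exp (- (3/8) * (norm x)\<^sup>2))"
      using integrable_exp_neg_sq_norm[of "3/8", where 'a = "real^'d"] by simp
    have "gauss_density x * norm x \<le> C * exp (- (norm x)\<^sup>2 / 2) * (2 * exp ((norm x)\<^sup>2 / 8))" for x :: "real^'d"
      using abs_le_exp_sq_div_8[of "norm x"] by (simp add: gauss_density_def C_def)
    also have "C * exp (- (norm x)\<^sup>2 / 2) * (2 * exp ((norm x)\<^sup>2 / 8)) = 2 * C * exp (- (3/8) * (norm x)\<^sup>2)" for x :: "real^'d"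
      by (simp add: mult_ac exp_add[symmetric])
    finally show "AE x in lborel. norm (gauss_density x *\<^sub>R norm x) \<le> norm (2 * C * exp (- (3/8) * (norm (x::real^'d))\<^sup>2))"
      by (simp add: C_def gauss_density_nonneg)
  qed measurable
  then show ?thesis
    unfolding std_gauss_eq_density by (subst integrable_density) (auto simp: gauss_density_nonneg)
qed

lemma integrable_std_gauss_linear_growth:
  fixes f :: "real^'d::finite \<Rightarrow> real"
  assumes "continuous_on UNIV f" "\<And>z. \<bar>f z\<bar> \<le> C * norm z"
  shows "integrable std_gauss f"
proof (rule Bochner_Integration.integrable_bound)
  show "integrable std_gauss (\<lambda>z::real^'d. C * norm z)"
    using integrable_norm_std_gauss[where 'd = 'd] by simp
  show "AE z in std_gauss. norm (f z) \<le> norm (C * norm z)"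
    by (intro AE_I2) (auto intro: order_trans[OF assms(2) abs_ge_self])
qed (use assms borel_measurable_std_gauss_continuous in auto)

section \<open>Gaussian integration by parts\<close>

lemma gauss_density_shift_has_real_derivative:
  fixes x v :: "real^'d::finite"
  shows "((\<lambda>s. gauss_density (x - s *\<^sub>R v)) has_real_derivative
           gauss_density (x - s *\<^sub>R v) * ((x - s *\<^sub>R v) \<bullet> v)) (at s)"
proof -
  have "(norm (x - s *\<^sub>R v))\<^sup>2 = (norm x)\<^sup>2 - 2 * s * (x \<bullet> v) + s\<^sup>2 * (norm v)\<^sup>2" for s
    unfolding power2_norm_eq_inner
    by (simp add: inner_diff_left inner_diff_right inner_commute power2_eq_square algebra_simps)
  then have "gauss_density (x - s *\<^sub>R v) = (2 * pi) powr (- real CARD('d) / 2)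
      * exp (- ((norm x)\<^sup>2 - 2 * s * (x \<bullet> v) + s\<^sup>2 * (norm v)\<^sup>2) / 2)" for s
    by (simp add: gauss_density_def)
  moreover have "(x - s *\<^sub>R v) \<bullet> v = x \<bullet> v - s * (norm v)\<^sup>2"
    by (simp add: inner_diff_left power2_norm_eq_inner)
  ultimately show ?thesis
    by (auto intro!: derivative_eq_intros)
qed

lemma exp_shift_norm_bound:
  fixes x v :: "real^'d::finite"
  assumes "\<bar>s\<bar> < 1"
  shows "exp (- (norm (x - s *\<^sub>R v))\<^sup>2 / 2) * (norm x + norm v)
     \<le> exp ((norm v)\<^sup>2 / 2) * (2 + norm v) * exp (- (1/8) * (norm x)\<^sup>2)"
proof -
  have "\<bar>s\<bar> * norm v \<le> norm v"
    using assms by (simp add: mult_left_le_one_le)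
  then have "norm x \<le> norm (x - s *\<^sub>R v) + norm v"
    using norm_triangle_ineq[of "x - s *\<^sub>R v" "s *\<^sub>R v"] by simp
  then have "(norm x)\<^sup>2 \<le> (norm (x - s *\<^sub>R v) + norm v)\<^sup>2"
    by (intro power_mono) auto
  also have "\<dots> \<le> 2 * (norm (x - s *\<^sub>R v))\<^sup>2 + 2 * (norm v)\<^sup>2"
    using sum_squares_bound[of "norm (x - s *\<^sub>R v)" "norm v"]
    by (simp add: power2_eq_square algebra_simps)
  finally have "exp (- (norm (x - s *\<^sub>R v))\<^sup>2 / 2) \<le> exp ((norm v)\<^sup>2 / 2) * exp (- (norm x)\<^sup>2 / 4)"
    by (simp add: exp_add[symmetric])
  then have "exp (- (norm (x - s *\<^sub>R v))\<^sup>2 / 2) * (norm x + norm v)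
      \<le> exp ((norm v)\<^sup>2 / 2) * exp (- (norm x)\<^sup>2 / 4) * (norm x + norm v)"
    by (rule mult_right_mono) simp
  also have "\<dots> = exp ((norm v)\<^sup>2 / 2) * (exp (- (norm x)\<^sup>2 / 4) * (norm x + norm v))"
    by (simp add: mult.assoc)
  also have "exp (- (norm x)\<^sup>2 / 4) * (norm x + norm v) \<le> (2 + norm v) * exp (- (1/8) * (norm x)\<^sup>2)"
  proof -
    define e where "e = exp (- (1/8) * (norm x)\<^sup>2)"
    have "norm x * e \<le> 2"
      using abs_le_exp_sq_div_8[of "norm x"] by (simp add: e_def exp_minus field_simps)
    moreover have "e \<le> 1" "0 \<le> e"
      by (simp_all add: e_def)
    moreover have "e * norm v \<le> norm v"
      using \<open>e \<le> 1\<close> \<open>0 \<le> e\<close> by (simp add: mult_left_le_one_le)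
    ultimately have "e * (norm x + norm v) \<le> 2 + norm v"
      by (simp add: distrib_left mult.commute)
    then have "e * (e * (norm x + norm v)) \<le> e * (2 + norm v)"
      using \<open>0 \<le> e\<close> by (rule mult_left_mono)
    moreover have "exp (- (norm x)\<^sup>2 / 4) = e * e"
      by (simp add: e_def exp_add[symmetric])
    ultimately show ?thesis
      by (simp add: e_def mult_ac)
  qed
  finally show ?thesis
    by (simp add: mult_left_mono mult.assoc)
qed

lemma gauss_density_shift_score_bound:
  fixes x v :: "real^'d::finite"
  assumes "\<bar>r\<bar> < 1"
  shows "gauss_density (x - r *\<^sub>R v) * \<bar>(x - r *\<^sub>R v) \<bullet> v\<bar>
    \<le> (2 * pi) powr (- real CARD('d) / 2) * norm v * exp ((norm v)\<^sup>2 / 2) * (2 + norm v)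
      * exp (- (1/8) * (norm x)\<^sup>2)"
proof -
  have "\<bar>r\<bar> * norm v \<le> norm v"
    using assms by (simp add: mult_left_le_one_le)
  then have "norm (x - r *\<^sub>R v) \<le> norm x + norm v"
    using norm_triangle_ineq4[of x "r *\<^sub>R v"] by simp
  then have "\<bar>(x - r *\<^sub>R v) \<bullet> v\<bar> \<le> (norm x + norm v) * norm v"
    by (rule abs_inner_le_bound)
  then have "gauss_density (x - r *\<^sub>R v) * \<bar>(x - r *\<^sub>R v) \<bullet> v\<bar>
      \<le> gauss_density (x - r *\<^sub>R v) * ((norm x + norm v) * norm v)"
    by (rule mult_left_mono) (rule gauss_density_nonneg)
  also have "\<dots> = (2 * pi) powr (- real CARD('d) / 2) * norm v
      * (exp (- (norm (x - r *\<^sub>R v))\<^sup>2 / 2) * (norm x + norm v))"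
    by (simp add: gauss_density_def)
  also have "\<dots> \<le> (2 * pi) powr (- real CARD('d) / 2) * norm v
      * (exp ((norm v)\<^sup>2 / 2) * (2 + norm v) * exp (- (1/8) * (norm x)\<^sup>2))"
    using exp_shift_norm_bound[OF assms, of x v] by (intro mult_left_mono) auto
  finally show ?thesis
    by (simp add: mult.assoc)
qed

text \<open>Translating the argument of \<open>k\<close> is the same as translating the Gaussian density;
  differentiating the latter produces the score \<open>z \<bullet> v\<close>.\<close>
lemma has_real_derivative_std_gauss_shift:
  fixes k :: "real^'d::finite \<Rightarrow> real"
  assumes [measurable]: "k \<in> borel_measurable borel"
    and k: "\<And>z. \<bar>k z\<bar> \<le> B"
  shows "((\<lambda>s. \<integral>z. k (z + s *\<^sub>R v) \<partial>std_gauss) has_real_derivative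
           (\<integral>z. k z * (z \<bullet> v) \<partial>std_gauss)) (at 0)"
proof -
  have B: "0 \<le> B"
    using k[of 0] by linarith
  have shift: "(\<integral>z. k (z + s *\<^sub>R v) \<partial>std_gauss) = (\<integral>x. gauss_density (x - s *\<^sub>R v) * k x \<partial>lborel)" for s
  proof -
    have "(\<integral>z. k (z + s *\<^sub>R v) \<partial>std_gauss) = (\<integral>z. gauss_density z * k (z + s *\<^sub>R v) \<partial>lborel)"
      by (intro integral_std_gauss) measurable
    also have "\<dots> = (\<integral>x. gauss_density (x - s *\<^sub>R v) * k x \<partial>distr lborel borel ((+) (s *\<^sub>R v)))"
      by (subst integral_distr) (auto simp: add.commute)
    finally show ?thesis
      by (simp add: lborel_distr_plus)
  qed
  define C where "C = (2 * pi) powr (- real CARD('d) / 2)"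
  define W where "W x = B * (C * norm v * exp ((norm v)\<^sup>2 / 2) * (2 + norm v) * exp (- (1/8) * (norm x)\<^sup>2))"
    for x :: "real^'d"
  have "((\<lambda>s. \<integral>x. gauss_density (x - s *\<^sub>R v) * k x \<partial>lborel) has_real_derivative
      (\<integral>x. gauss_density (x - 0 *\<^sub>R v) * ((x - 0 *\<^sub>R v) \<bullet> v) * k x \<partial>lborel)) (at 0)"
  proof (rule has_real_derivative_integral[where \<delta> = 1 and w = W])
    show "integrable lborel (\<lambda>x. gauss_density (x - 0 *\<^sub>R v) * k x)"
    proof (rule Bochner_Integration.integrable_bound)
      show "integrable lborel (\<lambda>x::real^'d. B * (C * exp (- (1/2) * (norm x)\<^sup>2)))"
        using integrable_exp_neg_sq_norm[of "1/2", where 'a = "real^'d"] by simp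
      show "AE x in lborel. norm (gauss_density (x - 0 *\<^sub>R v) * k x) \<le> norm (B * (C * exp (- (1/2) * (norm x)\<^sup>2)))"
        using k B by (intro AE_I2) (auto simp: gauss_density_def C_def abs_mult mult.commute mult_left_mono)
    qed measurable
    show "integrable lborel W"
      unfolding W_def using integrable_exp_neg_sq_norm[of "1/8", where 'a = "real^'d"] by simp
    show "((\<lambda>r. gauss_density (x - r *\<^sub>R v) * k x) has_real_derivative
        gauss_density (x - r *\<^sub>R v) * ((x - r *\<^sub>R v) \<bullet> v) * k x) (at r)" for x r
      by (auto intro!: derivative_eq_intros gauss_density_shift_has_real_derivative[THEN DERIV_cong])
    show "\<bar>gauss_density (x - r *\<^sub>R v) * ((x - r *\<^sub>R v) \<bullet> v) * k x\<bar> \<le> W x" if "\<bar>r - 0\<bar> < 1" for x r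
      using mult_mono[OF gauss_density_shift_score_bound[of r x v] k[of x]] that B
      by (simp add: W_def C_def abs_mult gauss_density_nonneg mult.commute)
  qed auto
  moreover have "(\<integral>z. k z * (z \<bullet> v) \<partial>std_gauss) = (\<integral>x. gauss_density x * ((x \<bullet> v) * k x) \<partial>lborel)"
    by (subst integral_std_gauss) (auto simp: mult.commute)
  ultimately show ?thesis
    unfolding shift by (simp add: mult_ac)
qed

lemma std_gauss_integration_by_parts:
  fixes k :: "real^'d::finite \<Rightarrow> real"
  assumes der: "\<And>z. (k has_derivative Dk z) (at z)"
    and bounds: "\<And>z. \<bar>k z\<bar> \<le> B" "\<And>z. \<bar>Dk z v\<bar> \<le> B'"
    and cont: "continuous_on UNIV (\<lambda>z. Dk z v)"
  shows "(\<integral>z. k z * (z \<bullet> v) \<partial>std_gauss) = (\<integral>z. Dk z v \<partial>std_gauss)"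
proof -
  interpret prob_space "std_gauss :: (real^'d) measure"
    by (rule prob_space_std_gauss)
  have k_cont: "continuous_on UNIV k"
    using der by (intro has_derivative_continuous_on[where f' = Dk]) auto
  have line: "((\<lambda>r. k (z + r *\<^sub>R v)) has_real_derivative Dk (z + r *\<^sub>R v) v) (at r)" for z r
  proof -
    have "((\<lambda>r. k (z + r *\<^sub>R v)) has_derivative (\<lambda>h. Dk (z + r *\<^sub>R v) (h *\<^sub>R v))) (at r)"
      by (rule has_derivative_compose[OF _ der]) (auto intro!: derivative_eq_intros)
    then show ?thesis
      unfolding has_field_derivative_def
      by (rule has_derivative_eq_rhs)
        (simp add: fun_eq_iff linear_cmul[OF has_derivative_linear[OF der]] mult.commute)
  qed
  have "((\<lambda>s. \<integral>z. k (z + s *\<^sub>R v) \<partial>std_gauss) has_real_derivative (\<integral>z. Dk (z + 0 *\<^sub>R v) v \<partial>std_gauss)) (at 0)"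
    (is "(?K has_real_derivative _) _")
  proof (rule has_real_derivative_integral[where \<delta> = 1 and w = "\<lambda>_. B'"])
    show "(\<lambda>z. k (z + r *\<^sub>R v)) \<in> borel_measurable std_gauss" for r
      by (intro borel_measurable_std_gauss_continuous continuous_on_compose2[OF k_cont]
          continuous_intros) auto
    show "integrable std_gauss (\<lambda>z. k (z + 0 *\<^sub>R v))"
      using integrable_std_gauss_bounded[OF k_cont bounds(1)] by simp
  qed (use borel_measurable_std_gauss_continuous[OF cont] line bounds in auto)
  moreover have "(?K has_real_derivative (\<integral>z. k z * (z \<bullet> v) \<partial>std_gauss)) (at 0)"
    using borel_measurable_continuous_onI[OF k_cont] bounds(1)
    by (rule has_real_derivative_std_gauss_shift)
  ultimately show ?thesis
    using DERIV_unique by force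
qed

lemma std_gauss_integration_by_parts_divergence:
  fixes G :: "real^'d::finite \<Rightarrow> real^'d"
  assumes der: "\<And>z. (G has_derivative DG z) (at z)"
    and bounds: "\<And>z. norm (G z) \<le> B" "\<And>z j. \<bar>DG z (axis j 1) $ j\<bar> \<le> B'"
    and cont: "\<And>j. continuous_on UNIV (\<lambda>z. DG z (axis j 1) $ j)"
  shows "(\<integral>z. G z \<bullet> z \<partial>std_gauss) = (\<integral>z. (\<Sum>j\<in>UNIV. DG z (axis j 1) $ j) \<partial>std_gauss)"
proof -
  have G_cont: "continuous_on UNIV G"
    using der by (intro has_derivative_continuous_on[where f' = DG]) auto
  have coord_der: "((\<lambda>z. G z $ j) has_derivative (\<lambda>h. DG z h $ j)) (at z)" for j z
    by (rule bounded_linear.has_derivative[OF bounded_linear_vec_nth der])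
  have coord_bound: "\<bar>G z $ j\<bar> \<le> B" for z j
    using component_le_norm_cart[of "G z" j] bounds(1)[of z] by linarith
  have "G z \<bullet> z = (\<Sum>j\<in>UNIV. G z $ j * (z \<bullet> axis j 1))" for z
    unfolding inner_axis by (simp add: inner_vec_def)
  moreover have "integrable std_gauss (\<lambda>z. G z $ j * (z \<bullet> axis j 1))" for j
  proof (rule integrable_std_gauss_linear_growth)
    show "\<bar>G z $ j * (z \<bullet> axis j 1)\<bar> \<le> B * norm z" for z
      using coord_bound[of z j] component_le_norm_cart[of z j]
      by (simp add: abs_mult inner_axis mult_mono)
  qed (intro continuous_intros G_cont)
  ultimately have "(\<integral>z. G z \<bullet> z \<partial>std_gauss) = (\<Sum>j\<in>UNIV. \<integral>z. G z $ j * (z \<bullet> axis j 1) \<partial>std_gauss)"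
    by (simp add: Bochner_Integration.integral_sum)
  also have "\<dots> = (\<Sum>j\<in>UNIV. \<integral>z. DG z (axis j 1) $ j \<partial>std_gauss)"
    using std_gauss_integration_by_parts[OF coord_der coord_bound bounds(2) cont] by simp
  also have "\<dots> = (\<integral>z. (\<Sum>j\<in>UNIV. DG z (axis j 1) $ j) \<partial>std_gauss)"
    using integrable_std_gauss_bounded[OF cont bounds(2)]
    by (intro Bochner_Integration.integral_sum[symmetric])
  finally show ?thesis .
qed

lemma std_gauss_integration_by_parts_matrix:
  fixes g :: "real^'d::finite \<Rightarrow> real^'d" and H :: "real^'d \<Rightarrow> real^'d^'d" and A :: "real^'d^'d"
  assumes g_der: "\<And>\<xi>. (g has_derivative (\<lambda>h. H \<xi> *v h)) (at \<xi>)"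
    and H_cont: "continuous_on UNIV H"
    and g_bound: "\<And>\<xi>. norm (g \<xi>) \<le> G1" and H_bound: "\<And>\<xi>. norm (H \<xi>) \<le> G2"
  shows "(\<integral>y. g (b + a *\<^sub>R (A *v y)) \<bullet> (A *v y) \<partial>std_gauss)
       = a * (\<integral>y. H (b + a *\<^sub>R (A *v y)) \<bullet> (A ** transpose A) \<partial>std_gauss)"
proof -
  define Z where "Z y = b + a *\<^sub>R (A *v y)" for y
  define DG where "DG y h = transpose A *v (H (Z y) *v (a *\<^sub>R (A *v h)))" for y h
  have Z_der: "(Z has_derivative (\<lambda>h. a *\<^sub>R (A *v h))) (at y)" for y
    unfolding Z_def
    by (auto intro!: derivative_eq_intros bounded_linear.has_derivative[OF matrix_vector_mul_bounded_linear])
  have "((\<lambda>y. transpose A *v g (Z y)) has_derivative DG y) (at y)" for y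
    unfolding DG_def[abs_def]
    by (rule bounded_linear.has_derivative[OF matrix_vector_mul_bounded_linear has_derivative_compose[OF Z_der g_der]])
  moreover have "norm (transpose A *v g (Z y)) \<le> norm A * G1" for y
    using norm_matrix_vector_mult_le[of "transpose A" "g (Z y)"] g_bound[of "Z y"]
    by (simp add: norm_transpose) (meson mult_left_mono norm_ge_zero order_trans)
  moreover have "\<bar>DG y (axis j 1) $ j\<bar> \<le> norm A * (G2 * (\<bar>a\<bar> * norm A))" for y j
  proof -
    have "norm (H (Z y) *v (a *\<^sub>R (A *v axis j 1))) \<le> norm (H (Z y)) * (\<bar>a\<bar> * norm (A *v axis j 1))"
      using norm_matrix_vector_mult_le[of "H (Z y)" "a *\<^sub>R (A *v axis j 1)"] by simp
    also have "\<dots> \<le> G2 * (\<bar>a\<bar> * norm A)"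
      using norm_matrix_vector_mult_le[of A "axis j 1"] H_bound[of "Z y"]
      by (intro mult_mono mult_left_mono) (auto intro: order_trans[OF norm_ge_zero])
    finally show ?thesis
      using abs_matrix_vector_mult_component_le[of "transpose A" _ j]
      by (simp add: DG_def norm_transpose) (meson mult_left_mono norm_ge_zero order_trans)
  qed
  moreover have "continuous_on UNIV (\<lambda>y. DG y (axis j 1) $ j)" for j
    unfolding DG_def Z_def by (intro continuous_intros continuous_on_compose2[OF H_cont]) simp_all
  ultimately have "(\<integral>y. (transpose A *v g (Z y)) \<bullet> y \<partial>std_gauss)
      = (\<integral>y. (\<Sum>j\<in>UNIV. DG y (axis j 1) $ j) \<partial>std_gauss)"
    by (rule std_gauss_integration_by_parts_divergence)
  moreover have "(\<Sum>j\<in>UNIV. DG y (axis j 1) $ j) = a * (H (Z y) \<bullet> (A ** transpose A))" for y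
    by (simp add: DG_def matrix_vector_mult_scaleR sum_distrib_left[symmetric] trace_transpose_mult_eq_inner
        del: transpose_matrix_vector)
  moreover have "g (Z y) \<bullet> (A *v y) = (transpose A *v g (Z y)) \<bullet> y" for y
    by (simp add: dot_lmul_matrix)
  ultimately show ?thesis
    by (simp add: Z_def)
qed

section \<open>Square roots of positive semidefinite matrices\<close>

definition outer_product :: "real^'n \<Rightarrow> real^'n^'n" where
  "outer_product u = (\<chi> i j. u $ i * u $ j)"

lemma outer_product_mult: "outer_product u *v x = (u \<bullet> x) *\<^sub>R u"
  by (simp add: outer_product_def vec_eq_iff matrix_vector_mult_def inner_vec_def sum_distrib_left mult_ac)

lemma transpose_outer_product: "transpose (outer_product u) = outer_product u"
  by (simp add: outer_product_def transpose_def vec_eq_iff mult.commute)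

lemma outer_product_scaleR: "outer_product (c *\<^sub>R u) = (c * c) *\<^sub>R outer_product u"
  by (simp add: outer_product_def vec_eq_iff)

lemma outer_product_zero[simp]: "outer_product 0 = 0"
  by (simp add: outer_product_def vec_eq_iff)

lemma rayleigh_quotient_attains_max:
  fixes S :: "real^'n^'n"
  obtains u where "norm u = 1" "\<And>y. y \<bullet> (S *v y) \<le> (u \<bullet> (S *v u)) * (y \<bullet> y)"
proof -
  define f where "f v = v \<bullet> (S *v v)" for v :: "real^'n"
  have "sphere (0::real^'n) 1 \<noteq> {}"
    by simp
  moreover have "continuous_on (sphere 0 1) f"
    unfolding f_def by (intro continuous_intros)
  ultimately obtain u where u: "u \<in> sphere 0 1" and max: "\<And>y. y \<in> sphere 0 1 \<Longrightarrow> f y \<le> f u"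
    using continuous_attains_sup[OF compact_sphere] by blast
  have "f y \<le> f u * (y \<bullet> y)" for y
  proof (cases "y = 0")
    case True
    then show ?thesis
      by (simp add: f_def)
  next
    case False
    then have "f y = (norm y)\<^sup>2 * f ((1 / norm y) *\<^sub>R y)"
      by (simp add: f_def matrix_vector_mult_scaleR power_divide power2_eq_square)
    also have "\<dots> \<le> (norm y)\<^sup>2 * f u"
      using max[of "(1 / norm y) *\<^sub>R y"] False by simp
    finally show ?thesis
      by (simp add: power2_norm_eq_inner mult.commute)
  qed
  then show thesis
    using u by (intro that) (auto simp: f_def)
qed

text \<open>First-order condition at a maximiser of the Rayleigh quotient: moving from \<open>u\<close> in a
  direction \<open>z \<bottom> u\<close> changes the quotient by \<open>2 t (z \<bullet> S u) + O(t\<^sup>2)\<close>,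
  so \<open>S u\<close> is orthogonal to \<open>u\<^sup>\<bottom>\<close>.\<close>
lemma symmetric_matrix_rayleigh_max_eigenvector:
  fixes S :: "real^'n^'n"
  assumes sym: "transpose S = S" and u: "norm u = 1"
    and max: "\<And>y. y \<bullet> (S *v y) \<le> (u \<bullet> (S *v u)) * (y \<bullet> y)"
  shows "S *v u = (u \<bullet> (S *v u)) *\<^sub>R u"
proof -
  define lam where "lam = u \<bullet> (S *v u)"
  have uu: "u \<bullet> u = 1"
    using u by (simp add: norm_eq_1)
  have orth: "z \<bullet> (S *v u) = 0" if "z \<bullet> u = 0" for z
  proof -
    have "2 * (z \<bullet> (S *v u)) * t \<le> (lam * (z \<bullet> z) - z \<bullet> (S *v z)) * t\<^sup>2" for t
    proof -
      have "u \<bullet> (S *v z) = z \<bullet> (S *v u)"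
        using symmetric_matrix_inner_commute[OF sym, of u z] by (simp add: inner_commute)
      then have "(u + t *\<^sub>R z) \<bullet> (S *v (u + t *\<^sub>R z)) = lam + 2 * t * (z \<bullet> (S *v u)) + t\<^sup>2 * (z \<bullet> (S *v z))"
        by (simp add: lam_def matrix_vector_right_distrib matrix_vector_mult_scaleR inner_add_left
            inner_add_right power2_eq_square algebra_simps)
      moreover have "(u + t *\<^sub>R z) \<bullet> (u + t *\<^sub>R z) = 1 + t\<^sup>2 * (z \<bullet> z)"
        using that uu by (simp add: inner_add_left inner_add_right inner_commute power2_eq_square)
      ultimately show ?thesis
        using max[of "u + t *\<^sub>R z"] by (simp add: lam_def algebra_simps)
    qed
    then have "2 * (z \<bullet> (S *v u)) = 0"
      by (rule linear_le_quadratic_imp_zero)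
    then show ?thesis
      by simp
  qed
  define e where "e = S *v u - lam *\<^sub>R u"
  have "e \<bullet> u = 0"
    using uu by (simp add: e_def lam_def inner_diff_left inner_diff_right inner_commute)
  then have "e \<bullet> e = 0"
    using orth[of e] by (simp add: e_def inner_diff_right)
  then show ?thesis
    by (simp add: e_def lam_def)
qed

lemma psd_matrix_eigenvector:
  fixes S :: "real^'n^'n"
  assumes sym: "transpose S = S" and psd: "\<And>v. 0 \<le> v \<bullet> (S *v v)" and "S \<noteq> 0"
  obtains u lam where "u \<bullet> u = 1" "0 < lam" "S *v u = lam *\<^sub>R u"
proof -
  obtain u where u: "norm u = 1" and max: "\<And>y. y \<bullet> (S *v y) \<le> (u \<bullet> (S *v u)) * (y \<bullet> y)"
    by (rule rayleigh_quotient_attains_max[of S]) auto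
  have eig: "S *v u = (u \<bullet> (S *v u)) *\<^sub>R u"
    using sym u max by (rule symmetric_matrix_rayleigh_max_eigenvector)
  have "0 < u \<bullet> (S *v u)"
  proof (rule ccontr)
    assume "\<not> 0 < u \<bullet> (S *v u)"
    then have zero: "y \<bullet> (S *v y) = 0" for y
      using max[of y] psd[of y] mult_nonpos_nonneg[of "u \<bullet> (S *v u)" "y \<bullet> y"] by simp
    have "S *v x = 0" for x
    proof -
      have "x \<bullet> (S *v (S *v x)) = (S *v x) \<bullet> (S *v x)"
        using symmetric_matrix_inner_commute[OF sym, of x "S *v x"] by simp
      then have "(x + S *v x) \<bullet> (S *v (x + S *v x)) = 2 * ((S *v x) \<bullet> (S *v x))"
        using zero[of x] zero[of "S *v x"]
        by (simp add: matrix_vector_right_distrib inner_add_left inner_add_right inner_commute)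
      then show ?thesis
        using zero[of "x + S *v x"] by simp
    qed
    then show False
      using \<open>S \<noteq> 0\<close> by (simp add: matrix_eq)
  qed
  then show thesis
    using u eig by (intro that) (auto simp: norm_eq_1)
qed

lemma psd_matrix_deflation:
  fixes S :: "real^'n^'n"
  assumes sym: "transpose S = S" and psd: "\<And>v. 0 \<le> v \<bullet> (S *v v)"
    and u: "u \<bullet> u = 1" "S *v u = lam *\<^sub>R u" and "0 < lam"
  defines "S' \<equiv> S - lam *\<^sub>R outer_product u"
  shows "transpose S' = S'" "\<And>v. 0 \<le> v \<bullet> (S' *v v)"
    and "dim {x. S *v x = 0} < dim {x. S' *v x = 0}"
proof -
  have S'_mult: "S' *v x = S *v x - (lam * (u \<bullet> x)) *\<^sub>R u" for x
    by (simp add: S'_def matrix_vector_mult_diff_rdistrib outer_product_mult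
        scaleR_matrix_vector_assoc[symmetric])
  have uS: "u \<bullet> (S *v x) = lam * (u \<bullet> x)" for x
    using symmetric_matrix_inner_commute[OF sym, of u x] u(2) by simp
  have "transpose S' = transpose S - lam *\<^sub>R transpose (outer_product u)"
    by (simp add: S'_def transpose_def vec_eq_iff)
  then show "transpose S' = S'"
    by (simp add: sym transpose_outer_product S'_def)
  show "0 \<le> v \<bullet> (S' *v v)" for v
  proof -
    define y where "y = v - (u \<bullet> v) *\<^sub>R u"
    have "y \<bullet> (S *v y) = v \<bullet> (S *v v) - lam * (u \<bullet> v)\<^sup>2"
      using u uS[of v]
      by (simp add: y_def matrix_vector_mult_diff_distrib matrix_vector_mult_scaleR inner_diff_left
          inner_diff_right inner_commute power2_eq_square algebra_simps)
    also have "\<dots> = v \<bullet> (S' *v v)"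
      by (simp add: S'_mult inner_diff_right power2_eq_square inner_commute)
    finally show ?thesis
      using psd[of y] by simp
  qed
  let ?K = "{x. S *v x = 0}"
  have "u \<bullet> x = 0" if "x \<in> ?K" for x
    using uS[of x] that \<open>0 < lam\<close> by simp
  then have "insert u ?K \<subseteq> {x. S' *v x = 0}"
    using u by (auto simp: S'_mult)
  then have "dim (insert u ?K) \<le> dim {x. S' *v x = 0}"
    by (rule dim_subset)
  moreover have "subspace ?K"
    by (auto simp: subspace_def matrix_vector_right_distrib matrix_vector_mult_scaleR)
  moreover have "u \<notin> ?K"
    using u \<open>0 < lam\<close> by auto
  ultimately show "dim ?K < dim {x. S' *v x = 0}"
    by (simp add: dim_insert span_eq_iff[THEN iffD2])
qed

text \<open>Induction on the rank \<open>CARD('n) - dim (ker S)\<close>: removing \<open>\<lambda> u u\<^sup>T\<close> for an eigenvector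
  \<open>u\<close> of positive eigenvalue \<open>\<lambda>\<close> lowers the rank, and each step consumes one index of \<open>T\<close>.\<close>
lemma psd_matrix_eq_sum_outer_product:
  fixes S :: "real^'n^'n" and T :: "'n set"
  assumes "transpose S = S" "\<And>v. 0 \<le> v \<bullet> (S *v v)"
    and "CARD('n) \<le> card T + dim {x. S *v x = 0}"
  shows "\<exists>w. S = (\<Sum>i\<in>T. outer_product (w i))"
  using assms
proof (induction "CARD('n) - dim {x. S *v x = 0}" arbitrary: S T rule: less_induct)
  case less
  show ?case
  proof (cases "S = 0")
    case True
    then show ?thesis
      by (intro exI[of _ "\<lambda>_. 0"]) simp
  next
    case False
    obtain u lam where u: "u \<bullet> u = 1" "0 < lam" "S *v u = lam *\<^sub>R u"
      by (rule psd_matrix_eigenvector[OF less.prems(1,2) False])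
    define S' where "S' = S - lam *\<^sub>R outer_product u"
    have S': "transpose S' = S'" "\<And>v. 0 \<le> v \<bullet> (S' *v v)"
      and dim_less: "dim {x. S *v x = 0} < dim {x. S' *v x = 0}"
      using psd_matrix_deflation[OF less.prems(1,2) u(1,3,2)] by (simp_all add: S'_def)
    have "dim {x. S' *v x = 0} \<le> CARD('n)"
      by (rule dim_subset_UNIV_cart)
    then obtain i where i: "i \<in> T"
      using less.prems(3) dim_less by fastforce
    have "CARD('n) \<le> card (T - {i}) + dim {x. S' *v x = 0}"
      using less.prems(3) dim_less i by simp
    moreover have "CARD('n) - dim {x. S' *v x = 0} < CARD('n) - dim {x. S *v x = 0}"
      using dim_less \<open>dim {x. S' *v x = 0} \<le> CARD('n)\<close> by linarith
    ultimately obtain w where w: "S' = (\<Sum>j\<in>T - {i}. outer_product (w j))"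
      using less.hyps S' by blast
    have "S = lam *\<^sub>R outer_product u + (\<Sum>j\<in>T - {i}. outer_product (w j))"
      by (simp add: S'_def flip: w)
    also have "lam *\<^sub>R outer_product u = outer_product (sqrt lam *\<^sub>R u)"
      using u(2) by (simp add: outer_product_scaleR)
    finally have S_eq: "S = outer_product (sqrt lam *\<^sub>R u) + (\<Sum>j\<in>T - {i}. outer_product (w j))" .
    let ?w = "w(i := sqrt lam *\<^sub>R u)"
    have "(\<Sum>j\<in>T. outer_product (?w j)) = outer_product (?w i) + (\<Sum>j\<in>T - {i}. outer_product (?w j))"
      using i by (intro sum.remove) auto
    also have "(\<Sum>j\<in>T - {i}. outer_product (?w j)) = (\<Sum>j\<in>T - {i}. outer_product (w j))"
      by (rule sum.cong) auto
    finally have "(\<Sum>j\<in>T. outer_product (?w j)) = S"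
      using S_eq by simp
    then show ?thesis
      by (intro exI[of _ ?w]) (rule sym)
  qed
qed

lemma psd_matrix_square_root:
  fixes S :: "real^'n^'n"
  assumes "transpose S = S" "\<And>v. 0 \<le> v \<bullet> (S *v v)"
  shows "\<exists>A::real^'n^'n. A ** transpose A = S"
proof -
  obtain w :: "'n \<Rightarrow> real^'n" where w: "S = (\<Sum>i\<in>UNIV. outer_product (w i))"
    using psd_matrix_eq_sum_outer_product[OF assms, of UNIV] by auto
  define A :: "real^'n^'n" where "A = (\<chi> r c. w c $ r)"
  have "A ** transpose A = S"
    unfolding w by (simp add: A_def vec_eq_iff matrix_matrix_mult_def transpose_def outer_product_def)
  then show ?thesis
    by blast
qed

section \<open>Two independent standard Gaussians\<close>

abbreviation std_gauss_pair :: "((real^'d::finite) \<times> (real^'d)) measure" where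
  "std_gauss_pair \<equiv> std_gauss \<Otimes>\<^sub>M std_gauss"

lemma pair_prob_space_std_gauss: "pair_prob_space (std_gauss :: (real^'d::finite) measure) std_gauss"
  by (simp add: pair_prob_space_def pair_sigma_finite_def prob_space_std_gauss prob_space_imp_sigma_finite)

lemma prob_space_std_gauss_pair: "prob_space (std_gauss_pair :: ((real^'d::finite) \<times> (real^'d)) measure)"
proof -
  interpret pair_prob_space "std_gauss :: (real^'d) measure" std_gauss
    by (rule pair_prob_space_std_gauss)
  show ?thesis
    by (rule prob_space_axioms)
qed

lemma borel_measurable_std_gauss_pair_continuous:
  fixes h :: "(real^'d::finite) \<times> (real^'d) \<Rightarrow> real"
  assumes "continuous_on UNIV h"
  shows "h \<in> borel_measurable std_gauss_pair"
proof -
  have "h \<in> borel_measurable ((borel :: (real^'d) measure) \<Otimes>\<^sub>M borel)"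
    using borel_measurable_continuous_onI[OF assms] by (simp add: borel_prod)
  moreover have "sets std_gauss_pair = sets ((borel :: (real^'d) measure) \<Otimes>\<^sub>M borel)"
    by (rule sets_pair_measure_cong) simp_all
  ultimately show ?thesis
    by (subst measurable_cong_sets) auto
qed

lemma integral_std_gauss_pair_swap:
  fixes h :: "(real^'d::finite) \<times> (real^'d) \<Rightarrow> real"
  assumes "h \<in> borel_measurable std_gauss_pair"
  shows "(\<integral>\<omega>. h (snd \<omega>, fst \<omega>) \<partial>std_gauss_pair) = (\<integral>\<omega>. h \<omega> \<partial>std_gauss_pair)"
proof -
  interpret pair_prob_space "std_gauss :: (real^'d) measure" std_gauss
    by (rule pair_prob_space_std_gauss)
  show ?thesis
    using integral_product_swap[OF assms] by (simp add: split_beta')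
qed

lemma
  fixes h :: "real^'d::finite \<Rightarrow> real"
  assumes h: "integrable std_gauss h"
  shows integrable_std_gauss_pair_fst: "integrable std_gauss_pair (\<lambda>\<omega>. h (fst \<omega>))"
    and integrable_std_gauss_pair_snd: "integrable std_gauss_pair (\<lambda>\<omega>. h (snd \<omega>))"
    and integral_std_gauss_pair_fst: "(\<integral>\<omega>. h (fst \<omega>) \<partial>std_gauss_pair) = (\<integral>x. h x \<partial>std_gauss)"
    and integral_std_gauss_pair_snd: "(\<integral>\<omega>. h (snd \<omega>) \<partial>std_gauss_pair) = (\<integral>x. h x \<partial>std_gauss)"
proof -
  interpret pair_prob_space "std_gauss :: (real^'d) measure" std_gauss
    by (rule pair_prob_space_std_gauss)
  have [measurable]: "h \<in> borel_measurable std_gauss"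
    using h by simp
  have distr: "distr std_gauss_pair std_gauss fst = (std_gauss :: (real^'d) measure)"
    by (rule prob_space.distr_pair_fst[OF prob_space_std_gauss])
  show fst: "integrable std_gauss_pair (\<lambda>\<omega>. h (fst \<omega>))"
    using integrable_distr_eq[of fst std_gauss_pair std_gauss h] h by (simp add: distr)
  show "integrable std_gauss_pair (\<lambda>\<omega>. h (snd \<omega>))"
    using integrable_product_swap[OF fst] by (simp add: split_beta')
  show fst_eq: "(\<integral>\<omega>. h (fst \<omega>) \<partial>std_gauss_pair) = (\<integral>x. h x \<partial>std_gauss)"
    using integral_distr[of fst std_gauss_pair std_gauss h] by (simp add: distr)
  show "(\<integral>\<omega>. h (snd \<omega>) \<partial>std_gauss_pair) = (\<integral>x. h x \<partial>std_gauss)"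
    using integral_std_gauss_pair_swap[of "\<lambda>\<omega>. h (fst \<omega>)"] fst_eq by simp
qed

lemma integrable_std_gauss_pair_affine_growth:
  fixes h :: "(real^'d::finite) \<times> (real^'d) \<Rightarrow> real"
  assumes "continuous_on UNIV h" "\<And>\<omega>. \<bar>h \<omega>\<bar> \<le> B + C * norm (fst \<omega>) + D * norm (snd \<omega>)"
  shows "integrable std_gauss_pair h"
proof (rule Bochner_Integration.integrable_bound)
  have [measurable]: "norm \<in> borel_measurable (std_gauss :: (real^'d) measure)"
    by (intro borel_measurable_std_gauss_continuous continuous_intros)
  interpret prob_space "std_gauss_pair :: ((real^'d) \<times> (real^'d)) measure"
    by (rule prob_space_std_gauss_pair)
  show "integrable std_gauss_pair (\<lambda>\<omega>::(real^'d) \<times> (real^'d). B + C * norm (fst \<omega>) + D * norm (snd \<omega>))"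
    using integrable_norm_std_gauss[where 'd = 'd]
    by (simp add: integrable_std_gauss_pair_fst integrable_std_gauss_pair_snd)
  show "AE \<omega> in std_gauss_pair. norm (h \<omega>) \<le> norm (B + C * norm (fst \<omega>) + D * norm (snd \<omega>))"
    using assms(2) by (intro AE_I2) (auto intro: order_trans[OF _ abs_ge_self])
qed (use borel_measurable_std_gauss_pair_continuous[OF assms(1)] in simp)

lemma std_gauss_pair_integration_by_parts:
  fixes g :: "real^'d::finite \<Rightarrow> real^'d" and H :: "real^'d \<Rightarrow> real^'d^'d"
    and A :: "real^'d^'d" and B :: "real^'d \<Rightarrow> real^'d"
  assumes g_der: "\<And>\<xi>. (g has_derivative (\<lambda>h. H \<xi> *v h)) (at \<xi>)"
    and H_cont: "continuous_on UNIV H"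
    and g_bound: "\<And>\<xi>. norm (g \<xi>) \<le> G1" and H_bound: "\<And>\<xi>. norm (H \<xi>) \<le> G2"
    and B_cont: "continuous_on UNIV B"
  shows "(\<integral>\<omega>. g (B (fst \<omega>) + a *\<^sub>R (A *v snd \<omega>)) \<bullet> (A *v snd \<omega>) \<partial>std_gauss_pair)
       = a * (\<integral>\<omega>. H (B (fst \<omega>) + a *\<^sub>R (A *v snd \<omega>)) \<bullet> (A ** transpose A) \<partial>std_gauss_pair)"
proof -
  interpret pair_prob_space "std_gauss :: (real^'d) measure" std_gauss
    by (rule pair_prob_space_std_gauss)
  define Z where "Z x y = B x + a *\<^sub>R (A *v y)" for x y
  have g_cont: "continuous_on UNIV g"
    using g_der by (intro has_derivative_continuous_on[where f' = "\<lambda>\<xi> h. H \<xi> *v h"]) auto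
  have Z_cont: "continuous_on UNIV (\<lambda>\<omega>. Z (fst \<omega>) (snd \<omega>))"
    unfolding Z_def by (intro continuous_intros continuous_on_compose2[OF B_cont]) auto
  have "integrable std_gauss_pair (\<lambda>\<omega>. g (Z (fst \<omega>) (snd \<omega>)) \<bullet> (A *v snd \<omega>))"
    using abs_inner_matrix_vector_mult_le[OF g_bound]
    by (intro integrable_std_gauss_pair_affine_growth[where B = 0 and C = 0 and D = "G1 * norm A"]
        continuous_intros continuous_on_compose2[OF g_cont Z_cont]) simp_all
  then have int_g: "integrable std_gauss_pair (\<lambda>(x, y). g (Z x y) \<bullet> (A *v y))"
    by (simp add: split_beta')
  have "integrable std_gauss_pair (\<lambda>\<omega>. H (Z (fst \<omega>) (snd \<omega>)) \<bullet> (A ** transpose A))"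
    using abs_inner_le_bound[OF H_bound]
    by (intro integrable_std_gauss_pair_affine_growth[where B = "G2 * norm (A ** transpose A)" and C = 0 and D = 0]
        continuous_intros continuous_on_compose2[OF H_cont Z_cont]) simp_all
  then have int_H: "integrable std_gauss_pair (\<lambda>(x, y). H (Z x y) \<bullet> (A ** transpose A))"
    by (simp add: split_beta')
  have "(\<integral>\<omega>. g (Z (fst \<omega>) (snd \<omega>)) \<bullet> (A *v snd \<omega>) \<partial>std_gauss_pair)
      = (\<integral>x. (\<integral>y. g (Z x y) \<bullet> (A *v y) \<partial>std_gauss) \<partial>std_gauss)"
    using integral_fst[OF int_g] by (simp add: split_beta')
  also have "\<dots> = (\<integral>x. a * (\<integral>y. H (Z x y) \<bullet> (A ** transpose A) \<partial>std_gauss) \<partial>std_gauss)"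
    unfolding Z_def using std_gauss_integration_by_parts_matrix[OF g_der H_cont g_bound H_bound] by simp
  also have "\<dots> = a * (\<integral>\<omega>. H (Z (fst \<omega>) (snd \<omega>)) \<bullet> (A ** transpose A) \<partial>std_gauss_pair)"
    using integral_fst[OF int_H] by (simp add: split_beta')
  finally show ?thesis
    by (simp add: Z_def)
qed

section \<open>Lipschitz continuity of Gaussian smoothing\<close>

lemma lipschitz_std_gauss_smoothing_mean:
  fixes f :: "real^'d::finite \<Rightarrow> real" and A :: "real^'d^'d"
  assumes f_der: "\<And>\<xi>. (f has_derivative (\<lambda>h. g \<xi> \<bullet> h)) (at \<xi>)"
    and g_bound: "\<And>\<xi>. norm (g \<xi>) \<le> G1" and f_bound: "\<And>\<xi>. \<bar>f \<xi>\<bar> \<le> M0"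
  shows "\<bar>(\<integral>z. f (\<mu>1 + A *v z) \<partial>std_gauss) - (\<integral>z. f (\<mu>2 + A *v z) \<partial>std_gauss)\<bar>
    \<le> G1 * norm (\<mu>1 - \<mu>2)"
proof -
  interpret prob_space "std_gauss :: (real^'d) measure"
    by (rule prob_space_std_gauss)
  have f_cont: "continuous_on UNIV f"
    using f_der by (intro has_derivative_continuous_on[where f' = "\<lambda>\<xi> h. g \<xi> \<bullet> h"]) auto
  have cont: "continuous_on UNIV (\<lambda>z. f (\<mu> + A *v z))" for \<mu>
    by (intro continuous_on_compose2[OF f_cont] continuous_intros) auto
  have "(\<integral>z. f (\<mu>1 + A *v z) \<partial>std_gauss) - (\<integral>z. f (\<mu>2 + A *v z) \<partial>std_gauss)
      = (\<integral>z. f (\<mu>1 + A *v z) - f (\<mu>2 + A *v z) \<partial>std_gauss)"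
    using integrable_std_gauss_bounded[OF cont f_bound] by simp
  also have "\<bar>\<dots>\<bar> \<le> G1 * norm (\<mu>1 - \<mu>2)"
    using lipschitz_bounded_gradient[OF f_der g_bound, of "\<mu>1 + A *v z" "\<mu>2 + A *v z" for z]
    by (intro abs_integral_le_const borel_measurable_std_gauss_continuous continuous_intros cont) simp
  finally show ?thesis .
qed

text \<open>For \<open>\<omega>\<close> standard normal on the product space, \<open>gauss_interpolation \<mu> A1 A2 t \<omega>\<close>
  has law \<open>N(\<mu>, cos\<^sup>2 t \<cdot> A1 A1\<^sup>T + sin\<^sup>2 t \<cdot> A2 A2\<^sup>T)\<close>: it moves from \<open>N(\<mu>, A1 A1\<^sup>T)\<close>
  at \<open>t = 0\<close> to \<open>N(\<mu>, A2 A2\<^sup>T)\<close> at \<open>t = \<pi>/2\<close>.\<close>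
definition gauss_interpolation ::
    "real^'d::finite \<Rightarrow> real^'d^'d \<Rightarrow> real^'d^'d \<Rightarrow> real \<Rightarrow> (real^'d) \<times> (real^'d) \<Rightarrow> real^'d" where
  "gauss_interpolation \<mu> A1 A2 t \<omega> = \<mu> + cos t *\<^sub>R (A1 *v fst \<omega>) + sin t *\<^sub>R (A2 *v snd \<omega>)"

lemma continuous_on_gauss_interpolation: "continuous_on UNIV (gauss_interpolation \<mu> A1 A2 t)"
  unfolding gauss_interpolation_def[abs_def] by (intro continuous_intros)

lemma gauss_interpolation_has_derivative:
  "((\<lambda>t. gauss_interpolation \<mu> A1 A2 t \<omega>) has_derivative
    (\<lambda>h. h *\<^sub>R (- sin t *\<^sub>R (A1 *v fst \<omega>) + cos t *\<^sub>R (A2 *v snd \<omega>)))) (at t)"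
  unfolding gauss_interpolation_def by (auto intro!: derivative_eq_intros simp: fun_eq_iff algebra_simps)

lemma norm_gauss_interpolation_velocity_le:
  fixes A1 :: "real^'n^'m" and A2 :: "real^'k^'m"
  shows "norm (- sin t *\<^sub>R (A1 *v fst \<omega>) + cos t *\<^sub>R (A2 *v snd \<omega>))
    \<le> norm A1 * norm (fst \<omega>) + norm A2 * norm (snd \<omega>)"
proof -
  have "norm (- sin t *\<^sub>R (A1 *v fst \<omega>) + cos t *\<^sub>R (A2 *v snd \<omega>))
      \<le> \<bar>sin t\<bar> * norm (A1 *v fst \<omega>) + \<bar>cos t\<bar> * norm (A2 *v snd \<omega>)"
    using norm_triangle_ineq[of "- sin t *\<^sub>R (A1 *v fst \<omega>)" "cos t *\<^sub>R (A2 *v snd \<omega>)"] by simp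
  also have "\<dots> \<le> norm (A1 *v fst \<omega>) + norm (A2 *v snd \<omega>)"
    by (intro add_mono mult_left_le_one_le) auto
  finally show ?thesis
    using norm_matrix_vector_mult_le[of A1 "fst \<omega>"] norm_matrix_vector_mult_le[of A2 "snd \<omega>"]
    by linarith
qed

lemma has_real_derivative_integral_gauss_interpolation:
  fixes f :: "real^'d::finite \<Rightarrow> real"
  assumes f_der: "\<And>\<xi>. (f has_derivative (\<lambda>h. g \<xi> \<bullet> h)) (at \<xi>)"
    and g_cont: "continuous_on UNIV g"
    and g_bound: "\<And>\<xi>. norm (g \<xi>) \<le> G1" and f_bound: "\<And>\<xi>. \<bar>f \<xi>\<bar> \<le> M0"
  shows "((\<lambda>t. \<integral>\<omega>. f (gauss_interpolation \<mu> A1 A2 t \<omega>) \<partial>std_gauss_pair) has_real_derivative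
    (\<integral>\<omega>. g (gauss_interpolation \<mu> A1 A2 t \<omega>) \<bullet> (- sin t *\<^sub>R (A1 *v fst \<omega>) + cos t *\<^sub>R (A2 *v snd \<omega>))
      \<partial>std_gauss_pair)) (at t)"
proof -
  let ?Z = "gauss_interpolation \<mu> A1 A2"
  define W where "W t \<omega> = - sin t *\<^sub>R (A1 *v fst \<omega>) + cos t *\<^sub>R (A2 *v snd \<omega>)"
    for t and \<omega> :: "(real^'d) \<times> (real^'d)"
  define w where "w \<omega> = G1 * (norm A1 * norm (fst \<omega>) + norm A2 * norm (snd \<omega>))"
    for \<omega> :: "(real^'d) \<times> (real^'d)"
  have f_cont: "continuous_on UNIV f"
    using f_der by (intro has_derivative_continuous_on[where f' = "\<lambda>\<xi> h. g \<xi> \<bullet> h"]) auto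
  show ?thesis
    unfolding W_def[symmetric]
  proof (rule has_real_derivative_integral[where \<delta> = 1 and w = w])
    show "(\<lambda>\<omega>. f (?Z r \<omega>)) \<in> borel_measurable std_gauss_pair" for r
      by (intro borel_measurable_std_gauss_pair_continuous continuous_on_compose2[OF f_cont]
          continuous_on_gauss_interpolation) simp
    show "(\<lambda>\<omega>. g (?Z t \<omega>) \<bullet> W t \<omega>) \<in> borel_measurable std_gauss_pair"
      unfolding W_def
      by (intro borel_measurable_std_gauss_pair_continuous continuous_intros
          continuous_on_compose2[OF g_cont continuous_on_gauss_interpolation]) simp
    show "integrable std_gauss_pair (\<lambda>\<omega>. f (?Z t \<omega>))"
      using f_bound
      by (intro integrable_std_gauss_pair_affine_growth[where C = 0 and D = 0] continuous_on_compose2[OF f_cont]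
          continuous_on_gauss_interpolation) simp_all
    show "integrable std_gauss_pair w"
      unfolding w_def using integrable_norm_std_gauss[where 'd = 'd]
      by (simp add: integrable_std_gauss_pair_fst integrable_std_gauss_pair_snd)
    show "((\<lambda>r. f (?Z r \<omega>)) has_real_derivative g (?Z r \<omega>) \<bullet> W r \<omega>) (at r)" for \<omega> r
      using has_derivative_compose[OF gauss_interpolation_has_derivative f_der]
      unfolding has_field_derivative_def W_def
      by (rule has_derivative_eq_rhs) (simp add: fun_eq_iff mult.commute)
    show "\<bar>g (?Z r \<omega>) \<bullet> W r \<omega>\<bar> \<le> w \<omega>" for \<omega> r
    proof -
      have "\<bar>g (?Z r \<omega>) \<bullet> W r \<omega>\<bar> \<le> G1 * norm (W r \<omega>)"
        by (rule abs_inner_le_bound[OF g_bound])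
      also have "\<dots> \<le> w \<omega>"
        unfolding w_def W_def using norm_gauss_interpolation_velocity_le order_trans[OF norm_ge_zero g_bound]
        by (rule mult_left_mono)
      finally show ?thesis .
    qed
  qed simp_all
qed

lemma
  fixes g :: "real^'d::finite \<Rightarrow> real^'d" and A1 A2 :: "real^'d^'d"
  assumes g_der: "\<And>\<xi>. (g has_derivative (\<lambda>h. H \<xi> *v h)) (at \<xi>)"
    and H_cont: "continuous_on UNIV H"
    and g_bound: "\<And>\<xi>. norm (g \<xi>) \<le> G1" and H_bound: "\<And>\<xi>. norm (H \<xi>) \<le> G2"
  shows integral_gauss_interpolation_score_fst:
      "(\<integral>\<omega>. g (gauss_interpolation \<mu> A1 A2 t \<omega>) \<bullet> (A1 *v fst \<omega>) \<partial>std_gauss_pair)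
        = cos t * (\<integral>\<omega>. H (gauss_interpolation \<mu> A1 A2 t \<omega>) \<bullet> (A1 ** transpose A1) \<partial>std_gauss_pair)"
    and integral_gauss_interpolation_score_snd:
      "(\<integral>\<omega>. g (gauss_interpolation \<mu> A1 A2 t \<omega>) \<bullet> (A2 *v snd \<omega>) \<partial>std_gauss_pair)
        = sin t * (\<integral>\<omega>. H (gauss_interpolation \<mu> A1 A2 t \<omega>) \<bullet> (A2 ** transpose A2) \<partial>std_gauss_pair)"
proof -
  let ?Z = "gauss_interpolation \<mu> A1 A2 t"
  have g_cont: "continuous_on UNIV g"
    using g_der by (intro has_derivative_continuous_on[where f' = "\<lambda>\<xi> h. H \<xi> *v h"]) auto
  show "(\<integral>\<omega>. g (?Z \<omega>) \<bullet> (A2 *v snd \<omega>) \<partial>std_gauss_pair)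
      = sin t * (\<integral>\<omega>. H (?Z \<omega>) \<bullet> (A2 ** transpose A2) \<partial>std_gauss_pair)"
    using std_gauss_pair_integration_by_parts[OF g_der H_cont g_bound H_bound,
        of "\<lambda>x. \<mu> + cos t *\<^sub>R (A1 *v x)" "sin t" A2]
    by (simp add: gauss_interpolation_def continuous_intros add.assoc)
  have swap: "?Z (snd \<omega>, fst \<omega>) = (\<mu> + sin t *\<^sub>R (A2 *v fst \<omega>)) + cos t *\<^sub>R (A1 *v snd \<omega>)" for \<omega>
    by (simp add: gauss_interpolation_def algebra_simps)
  have "(\<integral>\<omega>. g (?Z \<omega>) \<bullet> (A1 *v fst \<omega>) \<partial>std_gauss_pair)
      = (\<integral>\<omega>. g (?Z (snd \<omega>, fst \<omega>)) \<bullet> (A1 *v snd \<omega>) \<partial>std_gauss_pair)"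
  proof -
    have "continuous_on UNIV (\<lambda>\<omega>. g (?Z \<omega>) \<bullet> (A1 *v fst \<omega>))"
      by (intro continuous_intros continuous_on_compose2[OF g_cont continuous_on_gauss_interpolation]) simp
    from integral_std_gauss_pair_swap[OF borel_measurable_std_gauss_pair_continuous[OF this]]
    show ?thesis
      by simp
  qed
  also have "\<dots> = cos t * (\<integral>\<omega>. H (?Z (snd \<omega>, fst \<omega>)) \<bullet> (A1 ** transpose A1) \<partial>std_gauss_pair)"
    unfolding swap
    using std_gauss_pair_integration_by_parts[OF g_der H_cont g_bound H_bound,
        of "\<lambda>x. \<mu> + sin t *\<^sub>R (A2 *v x)" "cos t" A1]
    by (simp add: continuous_intros)
  also have "(\<integral>\<omega>. H (?Z (snd \<omega>, fst \<omega>)) \<bullet> (A1 ** transpose A1) \<partial>std_gauss_pair)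
      = (\<integral>\<omega>. H (?Z \<omega>) \<bullet> (A1 ** transpose A1) \<partial>std_gauss_pair)"
  proof -
    have "continuous_on UNIV (\<lambda>\<omega>. H (?Z \<omega>) \<bullet> (A1 ** transpose A1))"
      by (intro continuous_intros continuous_on_compose2[OF H_cont continuous_on_gauss_interpolation]) simp
    from integral_std_gauss_pair_swap[OF borel_measurable_std_gauss_pair_continuous[OF this]]
    show ?thesis
      by simp
  qed
  finally show "(\<integral>\<omega>. g (?Z \<omega>) \<bullet> (A1 *v fst \<omega>) \<partial>std_gauss_pair)
      = cos t * (\<integral>\<omega>. H (?Z \<omega>) \<bullet> (A1 ** transpose A1) \<partial>std_gauss_pair)" .
qed

lemma gauss_interpolation_has_real_derivative:
  fixes f :: "real^'d::finite \<Rightarrow> real" and A1 A2 :: "real^'d^'d"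
  assumes f_der: "\<And>\<xi>. (f has_derivative (\<lambda>h. g \<xi> \<bullet> h)) (at \<xi>)"
    and g_der: "\<And>\<xi>. (g has_derivative (\<lambda>h. H \<xi> *v h)) (at \<xi>)"
    and H_cont: "continuous_on UNIV H"
    and g_bound: "\<And>\<xi>. norm (g \<xi>) \<le> G1" and H_bound: "\<And>\<xi>. norm (H \<xi>) \<le> G2"
    and f_bound: "\<And>\<xi>. \<bar>f \<xi>\<bar> \<le> M0"
  shows "((\<lambda>t. \<integral>\<omega>. f (gauss_interpolation \<mu> A1 A2 t \<omega>) \<partial>std_gauss_pair) has_real_derivative
    sin t * cos t * (\<integral>\<omega>. H (gauss_interpolation \<mu> A1 A2 t \<omega>) \<bullet> (A2 ** transpose A2 - A1 ** transpose A1)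
      \<partial>std_gauss_pair)) (at t)"
proof -
  let ?Z = "gauss_interpolation \<mu> A1 A2 t"
  let ?I = "\<lambda>S. \<integral>\<omega>. H (?Z \<omega>) \<bullet> S \<partial>std_gauss_pair"
  have g_cont: "continuous_on UNIV g"
    using g_der by (intro has_derivative_continuous_on[where f' = "\<lambda>\<xi> h. H \<xi> *v h"]) auto
  have g_Z_cont: "continuous_on UNIV (\<lambda>\<omega>. g (?Z \<omega>))"
    by (intro continuous_on_compose2[OF g_cont continuous_on_gauss_interpolation]) simp
  have H_Z_cont: "continuous_on UNIV (\<lambda>\<omega>. H (?Z \<omega>))"
    by (intro continuous_on_compose2[OF H_cont continuous_on_gauss_interpolation]) simp
  have int_g_fst: "integrable std_gauss_pair (\<lambda>\<omega>. g (?Z \<omega>) \<bullet> (A1 *v fst \<omega>))"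
    using abs_inner_matrix_vector_mult_le[OF g_bound]
    by (intro integrable_std_gauss_pair_affine_growth[where B = 0 and C = "G1 * norm A1" and D = 0]
        continuous_intros g_Z_cont) simp_all
  have int_g_snd: "integrable std_gauss_pair (\<lambda>\<omega>. g (?Z \<omega>) \<bullet> (A2 *v snd \<omega>))"
    using abs_inner_matrix_vector_mult_le[OF g_bound]
    by (intro integrable_std_gauss_pair_affine_growth[where B = 0 and C = 0 and D = "G1 * norm A2"]
        continuous_intros g_Z_cont) simp_all
  have int_H: "integrable std_gauss_pair (\<lambda>\<omega>. H (?Z \<omega>) \<bullet> S)" for S
    using abs_inner_le_bound[OF H_bound]
    by (intro integrable_std_gauss_pair_affine_growth[where B = "G2 * norm S" and C = 0 and D = 0]
        continuous_intros H_Z_cont)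
      simp_all
  have "(\<integral>\<omega>. g (?Z \<omega>) \<bullet> (- sin t *\<^sub>R (A1 *v fst \<omega>) + cos t *\<^sub>R (A2 *v snd \<omega>)) \<partial>std_gauss_pair)
      = - sin t * (\<integral>\<omega>. g (?Z \<omega>) \<bullet> (A1 *v fst \<omega>) \<partial>std_gauss_pair)
        + cos t * (\<integral>\<omega>. g (?Z \<omega>) \<bullet> (A2 *v snd \<omega>) \<partial>std_gauss_pair)"
  proof -
    have "(\<lambda>\<omega>. g (?Z \<omega>) \<bullet> (- sin t *\<^sub>R (A1 *v fst \<omega>) + cos t *\<^sub>R (A2 *v snd \<omega>)))
        = (\<lambda>\<omega>. - sin t * (g (?Z \<omega>) \<bullet> (A1 *v fst \<omega>)) + cos t * (g (?Z \<omega>) \<bullet> (A2 *v snd \<omega>)))"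
      by (simp add: fun_eq_iff inner_diff_right)
    then show ?thesis
      using int_g_fst int_g_snd by simp
  qed
  also have "\<dots> = sin t * cos t * ?I (A2 ** transpose A2 - A1 ** transpose A1)"
    using int_H
    by (simp add: integral_gauss_interpolation_score_fst[OF g_der H_cont g_bound H_bound]
        integral_gauss_interpolation_score_snd[OF g_der H_cont g_bound H_bound] inner_diff_right algebra_simps)
  finally show ?thesis
    by (rule DERIV_cong[OF has_real_derivative_integral_gauss_interpolation[OF f_der g_cont g_bound f_bound]])
qed

lemma lipschitz_std_gauss_smoothing_cov:
  fixes f :: "real^'d::finite \<Rightarrow> real" and A1 A2 :: "real^'d^'d"
  assumes f_der: "\<And>\<xi>. (f has_derivative (\<lambda>h. g \<xi> \<bullet> h)) (at \<xi>)"
    and g_der: "\<And>\<xi>. (g has_derivative (\<lambda>h. H \<xi> *v h)) (at \<xi>)"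
    and H_cont: "continuous_on UNIV H"
    and g_bound: "\<And>\<xi>. norm (g \<xi>) \<le> G1" and H_bound: "\<And>\<xi>. norm (H \<xi>) \<le> G2"
    and f_bound: "\<And>\<xi>. \<bar>f \<xi>\<bar> \<le> M0"
  shows "\<bar>(\<integral>z. f (\<mu> + A1 *v z) \<partial>std_gauss) - (\<integral>z. f (\<mu> + A2 *v z) \<partial>std_gauss)\<bar>
    \<le> G2 / 2 * norm (A1 ** transpose A1 - A2 ** transpose A2)"
proof -
  interpret prob_space "std_gauss_pair :: ((real^'d) \<times> (real^'d)) measure"
    by (rule prob_space_std_gauss_pair)
  let ?Z = "gauss_interpolation \<mu> A1 A2"
  have f_cont: "continuous_on UNIV f"
    using f_der by (intro has_derivative_continuous_on[where f' = "\<lambda>\<xi> h. g \<xi> \<bullet> h"]) auto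
  have int: "integrable std_gauss (\<lambda>z. f (\<mu> + A *v z))" for A :: "real^'d^'d"
    using f_bound by (intro integrable_std_gauss_bounded continuous_on_compose2[OF f_cont] continuous_intros) auto
  have "\<bar>(\<integral>\<omega>. f (?Z (pi / 2) \<omega>) \<partial>std_gauss_pair) - (\<integral>\<omega>. f (?Z 0 \<omega>) \<partial>std_gauss_pair)\<bar>
      \<le> G2 * norm (A2 ** transpose A2 - A1 ** transpose A1) / 2"
  proof (rule abs_diff_le_of_sin_cos_derivative)
    show "\<bar>\<integral>\<omega>. H (?Z t \<omega>) \<bullet> (A2 ** transpose A2 - A1 ** transpose A1) \<partial>std_gauss_pair\<bar>
        \<le> G2 * norm (A2 ** transpose A2 - A1 ** transpose A1)" for t
      using abs_inner_le_bound[OF H_bound]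
      by (intro abs_integral_le_const borel_measurable_std_gauss_pair_continuous continuous_intros
          continuous_on_compose2[OF H_cont continuous_on_gauss_interpolation]) auto
  qed (rule gauss_interpolation_has_real_derivative[OF f_der g_der H_cont g_bound H_bound f_bound])
  moreover have "(\<integral>\<omega>. f (?Z 0 \<omega>) \<partial>std_gauss_pair) = (\<integral>z. f (\<mu> + A1 *v z) \<partial>std_gauss)"
    using integral_std_gauss_pair_fst[OF int[of A1]] by (simp add: gauss_interpolation_def)
  moreover have "(\<integral>\<omega>. f (?Z (pi / 2) \<omega>) \<partial>std_gauss_pair) = (\<integral>z. f (\<mu> + A2 *v z) \<partial>std_gauss)"
    using integral_std_gauss_pair_snd[OF int[of A2]] by (simp add: gauss_interpolation_def)
  ultimately show ?thesis
    by (simp add: abs_minus_commute norm_minus_commute)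
qed

lemma integral_gauss:
  fixes f :: "real^'d::finite \<Rightarrow> real"
  assumes "continuous_on UNIV f"
  shows "(\<integral>\<xi>. f \<xi> \<partial>gauss \<mu> Sig)
    = (\<integral>z. f (\<mu> + (SOME A::real^'d^'d. A ** transpose A = Sig) *v z) \<partial>std_gauss)"
proof -
  have "(\<lambda>z. \<mu> + (SOME A::real^'d^'d. A ** transpose A = Sig) *v z) \<in> measurable std_gauss borel"
    by (intro borel_measurable_std_gauss_continuous continuous_intros)
  then show ?thesis
    unfolding gauss_def by (rule integral_distr) (rule borel_measurable_continuous_onI[OF assms])
qed

lemma lipschitz_gauss_mixture:
  fixes f :: "real^'d::finite \<Rightarrow> real" and S1 S2 :: "real^'d^'d"
  assumes f_der: "\<And>\<xi>. (f has_derivative (\<lambda>h. g \<xi> \<bullet> h)) (at \<xi>)"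
    and g_der: "\<And>\<xi>. (g has_derivative (\<lambda>h. H \<xi> *v h)) (at \<xi>)"
    and H_cont: "continuous_on UNIV H"
    and g_bound: "\<And>\<xi>. norm (g \<xi>) \<le> G1" and H_bound: "\<And>\<xi>. norm (H \<xi>) \<le> G2"
    and f_bound: "\<And>\<xi>. \<bar>f \<xi>\<bar> \<le> M0"
    and S1: "transpose S1 = S1" "\<And>v. 0 \<le> v \<bullet> (S1 *v v)"
    and S2: "transpose S2 = S2" "\<And>v. 0 \<le> v \<bullet> (S2 *v v)"
  shows "\<bar>(\<integral>\<xi>. f \<xi> \<partial>gauss \<mu>1 S1) - (\<integral>\<xi>. f \<xi> \<partial>gauss \<mu>2 S2)\<bar>
    \<le> (G1 + G2 / 2) * norm ((\<mu>1, S1) - (\<mu>2, S2))"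
proof -
  \<comment> \<open>Only \<open>A A\<^sup>T = S\<close> is used below, so it does not matter which square root \<open>SOME\<close> picks.\<close>
  define A1 :: "real^'d^'d" where "A1 = (SOME A. A ** transpose A = S1)"
  define A2 :: "real^'d^'d" where "A2 = (SOME A. A ** transpose A = S2)"
  have A1: "A1 ** transpose A1 = S1"
    unfolding A1_def by (rule someI_ex[OF psd_matrix_square_root[OF S1]])
  have A2: "A2 ** transpose A2 = S2"
    unfolding A2_def by (rule someI_ex[OF psd_matrix_square_root[OF S2]])
  have f_cont: "continuous_on UNIV f"
    using f_der by (intro has_derivative_continuous_on[where f' = "\<lambda>\<xi> h. g \<xi> \<bullet> h"]) auto
  have "0 \<le> G1" "0 \<le> G2"
    using order_trans[OF norm_ge_zero g_bound[of 0]] order_trans[OF norm_ge_zero H_bound[of 0]] .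
  have "\<bar>(\<integral>\<xi>. f \<xi> \<partial>gauss \<mu>1 S1) - (\<integral>\<xi>. f \<xi> \<partial>gauss \<mu>2 S2)\<bar>
      \<le> \<bar>(\<integral>z. f (\<mu>1 + A1 *v z) \<partial>std_gauss) - (\<integral>z. f (\<mu>2 + A1 *v z) \<partial>std_gauss)\<bar>
        + \<bar>(\<integral>z. f (\<mu>2 + A1 *v z) \<partial>std_gauss) - (\<integral>z. f (\<mu>2 + A2 *v z) \<partial>std_gauss)\<bar>"
    unfolding integral_gauss[OF f_cont] A1_def[symmetric] A2_def[symmetric] by linarith
  also have "\<dots> \<le> G1 * norm (\<mu>1 - \<mu>2) + G2 / 2 * norm (S1 - S2)"
    using lipschitz_std_gauss_smoothing_mean[OF f_der g_bound f_bound, of \<mu>1 A1 \<mu>2]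
      lipschitz_std_gauss_smoothing_cov[OF f_der g_der H_cont g_bound H_bound f_bound, of \<mu>2 A1 A2]
    unfolding A1 A2 by linarith
  also have "\<dots> \<le> G1 * norm ((\<mu>1, S1) - (\<mu>2, S2)) + G2 / 2 * norm ((\<mu>1, S1) - (\<mu>2, S2))"
    using norm_fst_le[of "\<mu>1 - \<mu>2" "S1 - S2"] norm_snd_le[of "S1 - S2" "\<mu>1 - \<mu>2"] \<open>0 \<le> G1\<close> \<open>0 \<le> G2\<close>
    by (intro add_mono mult_left_mono) auto
  finally show ?thesis
    by (simp add: algebra_simps)
qed

theorem lemma6:
  fixes lam :: "'s measure"
    and p :: "real^'d::finite \<Rightarrow> 's \<Rightarrow> 'act \<Rightarrow> 's \<Rightarrow> real"
    and D :: "('s \<times> 'act \<times> 's) set"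
    and Xi :: "(real^'d) set"
    and M smax c G1 G2 :: real
  assumes sigma_fin: "sigma_finite_measure lam"
    and kernel_meas: "\<And>xi s a. s \<in> space lam \<Longrightarrow> (\<lambda>s'. p xi s a s') \<in> borel_measurable lam"
    and kernel_prob: "\<And>xi s a. s \<in> space lam \<Longrightarrow>
          (\<integral>\<^sup>+ s'. ennreal (p xi s a s') \<partial>lam) = 1"
    and p_bounds: "\<And>xi s a s'. s \<in> space lam \<Longrightarrow> s' \<in> space lam \<Longrightarrow>
          0 \<le> p xi s a s' \<and> p xi s a s' \<le> M"
    and Xi_compact: "compact Xi"
    and data: "D \<subseteq> space lam \<times> UNIV \<times> space lam"
    and c_pos: "c > 0"
    and q_lower: "\<And>s a s' phi. (s, a, s') \<in> D \<Longrightarrow> phi \<in> Phi Xi smax \<Longrightarrow>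
          qmix p phi s a s' \<ge> c"
    and G_pos: "G1 > 0" "G2 > 0"
    and smooth: "\<And>s a s'. s \<in> space lam \<Longrightarrow> s' \<in> space lam \<Longrightarrow>
          \<exists>g H. (\<forall>xi. ((\<lambda>z. p z s a s') has_derivative (\<lambda>h. g xi \<bullet> h)) (at xi))
              \<and> (\<forall>xi. (g has_derivative (\<lambda>h. H xi *v h)) (at xi))
              \<and> continuous_on UNIV H
              \<and> (\<forall>xi. norm (g xi) \<le> G1 \<and> norm (H xi) \<le> G2)"
  shows "\<forall>x\<in>D. \<forall>phi\<in>Phi Xi smax. \<forall>psi\<in>Phi Xi smax.
           \<bar>loglik p x phi - loglik p x psi\<bar> \<le> (G1 + G2 / 2) / c * norm (phi - psi)"
proof (intro ballI)
  fix x phi psi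
  assume x: "x \<in> D" and phi: "phi \<in> Phi Xi smax" and psi: "psi \<in> Phi Xi smax"
  obtain s a s' where x_eq: "x = (s, a, s')"
    by (cases x)
  then have s: "s \<in> space lam" "s' \<in> space lam"
    using data x by auto
  obtain g H where p_der: "\<And>\<xi>. ((\<lambda>z. p z s a s') has_derivative (\<lambda>h. g \<xi> \<bullet> h)) (at \<xi>)"
    and g_der: "\<And>\<xi>. (g has_derivative (\<lambda>h. H \<xi> *v h)) (at \<xi>)" and H_cont: "continuous_on UNIV H"
    and g_bound: "\<And>\<xi>. norm (g \<xi>) \<le> G1" and H_bound: "\<And>\<xi>. norm (H \<xi>) \<le> G2"
    using smooth[OF s] by blast
  have p_bound: "\<bar>p \<xi> s a s'\<bar> \<le> M" for \<xi>
    using p_bounds[OF s, of \<xi> a] by auto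
  obtain \<mu>1 S1 \<mu>2 S2 where phi_eq: "phi = (\<mu>1, S1)" and psi_eq: "psi = (\<mu>2, S2)"
    by (cases phi, cases psi)
  have "\<bar>qmix p phi s a s' - qmix p psi s a s'\<bar> \<le> (G1 + G2 / 2) * norm (phi - psi)"
    using phi psi unfolding qmix_def phi_eq psi_eq Phi_def fst_conv snd_conv
    by (intro lipschitz_gauss_mixture[OF p_der g_der H_cont g_bound H_bound p_bound]) auto
  moreover have "c \<le> qmix p phi s a s'" "c \<le> qmix p psi s a s'"
    using q_lower x phi psi by (simp_all add: x_eq)
  ultimately have "\<bar>ln (qmix p phi s a s') - ln (qmix p psi s a s')\<bar> \<le> (G1 + G2 / 2) * norm (phi - psi) / c"
    using abs_ln_diff_le[OF c_pos] c_pos by (meson divide_right_mono less_imp_le order_trans)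
  then show "\<bar>loglik p x phi - loglik p x psi\<bar> \<le> (G1 + G2 / 2) / c * norm (phi - psi)"
    by (simp add: loglik_def x_eq)
qed

end
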